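(* Let $R,K,N,s$ be positive integers with $s\le N$, $m=RK$, $p\in[0,1]$, $\epsilon>0$, $c>0$. There is a constant $C>0$ depending only on $c$ such that the following holds. Let $\mathbf{A}\in\mathbb{R}^{m\times N}$ be a subGaussian random matrix with parameter $c$, and let $\mathcal{T}\subseteq\{1,\ldots,m\}$ be the random set of indices of measurements observed at the fusion center of a serial-star network with $R$ branches of $K$ sensors (independent of $\mathbf{A}$). Let $\delta\in(0,1)$. If $$R\ \ge\ \left[\ln\frac{1-pe^{-C\delta^2}}{1-p+p\left(1-e^{-C\delta^2}\right)\left(pe^{-C\delta^2}\right)^K}\right]^{-1}\left[\frac{4}{3}s\ln\left(\frac{eN}{s}\right)+\frac{14}{3}s+\frac{4}{3}\ln\frac{2}{\epsilon}\right],$$ then with probability at least $1-\epsilon$ the $s$-restricted isometry constant $\delta_s$ of $|\mathcal{T}|^{-1/2}\mathbf{A}_{\mathcal{T}}$ satisfies $\delta_s<\delta$.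
   Context: A random variable $A$ is subGaussian with parameter $c$ if $\mathbb{E}[\exp(\theta A)]\le\exp(c\theta^2)$ for all $\theta\in\mathbb{R}$; a subGaussian random matrix with parameter $c$ has independent, zero mean, unit variance subGaussian entries with common parameter $c$. Serial-star network: the $m=RK$ sensors are arranged in $R$ branches; in each branch sensor $j$ ($j=1,\ldots,K$) forwards all measurements it holds (its own plus those received from sensor $j-1$) to sensor $j+1$, and sensor $K$ forwards to the fusion center. Each of the $RK$ links (sensor $j\to j+1$ for $j<K$, and sensor $K\to$ fusion center) is an independent Bernoulli erasure channel delivering the transmitted data with probability $p$ and losing it otherwise; thus the measurement of sensor $j$ in a branch reaches the fusion center iff all $K-j+1$ links from sensor $j$ onward succeed. $\mathcal{T}$ is the set of indices of measurements reaching the fusion center and $\mathbf{A}_{\mathcal{T}}$ the submatrix of rows indexed by $\mathcal{T}$. The $s$-restricted isometry constant of a matrix $\mathbf{B}$ with $N$ columns is $\delta_s=\inf\{\delta:1-\delta\le\|\mathbf{B}\mathbf{z}\|^2\le1+\delta\ \forall\mathbf{z},\ \|\mathbf{z}\|=1,\ \|\mathbf{z}\|_0\le s\}$. The right-hand side is $+\infty$ when $p=0$. *)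

theory Defs
  imports "HOL-Probability.Probability"
begin

text \<open>A matrix is represented as a function B :: nat => nat => real, with
  rows indexed by a finite set I and columns by {..<N}.  Vectors z in R^N are
  functions nat => real vanishing outside {..<N}.\<close>

definition sq_norm_image :: "(nat \<Rightarrow> nat \<Rightarrow> real) \<Rightarrow> nat set \<Rightarrow> nat \<Rightarrow> (nat \<Rightarrow> real) \<Rightarrow> real" where
  "sq_norm_image B I N z = (\<Sum>i\<in>I. (\<Sum>j<N. B i j * z j)\<^sup>2)"

definition sparse_unit :: "nat \<Rightarrow> nat \<Rightarrow> (nat \<Rightarrow> real) \<Rightarrow> bool" where
  "sparse_unit N s z \<longleftrightarrow> (\<forall>j\<ge>N. z j = 0) \<and> (\<Sum>j<N. (z j)\<^sup>2) = 1
      \<and> card {j\<in>{..<N}. z j \<noteq> 0} \<le> s"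

definition ric :: "(nat \<Rightarrow> nat \<Rightarrow> real) \<Rightarrow> nat set \<Rightarrow> nat \<Rightarrow> nat \<Rightarrow> real" where
  "ric B I N s = Inf {d. \<forall>z. sparse_unit N s z \<longrightarrow>
       1 - d \<le> sq_norm_image B I N z \<and> sq_norm_image B I N z \<le> 1 + d}"

text \<open>Serial-star network: link k (0-based, k < K) of branch r carries the data
  out of sensor k (to sensor k+1, or to the fusion center if k = K-1).\<close>
definition received :: "nat \<Rightarrow> nat \<Rightarrow> (nat \<Rightarrow> nat \<Rightarrow> bool) \<Rightarrow> nat set" where
  "received R K L = {r * K + j | r j. r < R \<and> j < K \<and> (\<forall>k. j \<le> k \<and> k < K \<longrightarrow> L r k)}"

end

theory Submission
  imports Defs
begin

text \<open>Fix the set \<open>t\<close> of \<open>n\<close> received rows first. For a fixed vector \<open>x\<close>, the energy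
  \<open>\<Sum>i\<in>t. (A\<^sub>i \<cdot> x)\<^sup>2\<close> is a sum of \<open>n\<close> independent squares of subGaussian variables with mean
  \<open>|x|\<^sup>2\<close>, so by Chernoff's bound it leaves \<open>[(1 - \<eta>) n |x|\<^sup>2, (1 + \<eta>) n |x|\<^sup>2]\<close> with probability
  at most \<open>2 exp (-\<eta>\<^sup>2 n / (16 a\<^sup>2))\<close>, with \<open>a\<close> depending only on \<open>c\<close>. A union bound over the \<open>N choose s\<close> supports and a net of
  at most \<open>exp (201 s) 4\<^sup>s\<close> points on each of them, together with a polarization argument that
  passes from the net to all \<open>s\<close>-sparse unit vectors, shows that the restricted isometry constant
  of the normalized submatrix is at least \<open>\<delta>\<close> with probability at most \<open>K q\<^sup>n\<close>, where
  \<open>q = exp (-C \<delta>\<^sup>2)\<close> and \<open>K = 2 (e N / s)\<^sup>s exp (7 s / 2)\<close>.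

  As the received set \<open>T\<close> is independent of \<open>A\<close>, the failure probability is at most
  \<open>K E q\<^sup>|\<^sup>T\<^sup>|\<close>. In a branch, the measurement of sensor \<open>j\<close> arrives iff the links \<open>j, ..., K-1\<close> all
  work, so the number of its received measurements is the length of the run of working links
  ending at the fusion center. The branches are independent and each contributes the factor
  \<open>(1 - p + p (1 - q) (p q)\<^sup>K) / (1 - p q)\<close> to \<open>E q\<^sup>|\<^sup>T\<^sup>|\<close>; the hypothesis on \<open>R\<close> makes \<open>K\<close> times
  the \<open>R\<close>-th power of this factor at most \<open>\<epsilon>\<close>.\<close>

lemma power_div_fact_le_exp:
  fixes x :: real
  assumes "0 \<le> x"
  shows "x ^ n / fact n \<le> exp x"
proof -
  have "(\<lambda>n. x ^ n /\<^sub>R fact n) sums exp x" by (rule exp_converges)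
  then have s: "summable (\<lambda>n. x ^ n /\<^sub>R fact n)" and e: "exp x = (\<Sum>n. x ^ n /\<^sub>R fact n)"
    by (auto simp: sums_iff)
  have "(\<Sum>i\<in>{n}. x ^ i /\<^sub>R fact i) \<le> (\<Sum>n. x ^ n /\<^sub>R fact n)"
    by (rule sum_le_suminf[OF s]) (use assms in auto)
  then show ?thesis using e by (simp add: divide_inverse mult.commute)
qed

lemma binomial_le_exp_pow:
  assumes "0 < s" "s \<le> N"
  shows "real (N choose s) \<le> (exp 1 * real N / real s) ^ s"
proof -
  have "real (N choose s) * fact s \<le> real N ^ s"
    using binomial_fact_pow[of N s] by (metis of_nat_fact of_nat_le_iff of_nat_mult of_nat_power)
  then have "real (N choose s) \<le> real N ^ s / real s ^ s * (real s ^ s / fact s)"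
    using assms by (simp add: field_simps)
  also have "\<dots> \<le> real N ^ s / real s ^ s * exp (real s)"
    by (intro mult_left_mono power_div_fact_le_exp) auto
  also have "\<dots> = (exp 1 * real N / real s) ^ s"
    by (simp add: power_divide power_mult_distrib exp_of_nat_mult[symmetric] mult.commute)
  finally show ?thesis .
qed

lemma one_le_exp_ratio_pow:
  assumes "0 < s" "s \<le> N"
  shows "1 \<le> (exp 1 * real N / real s) ^ s"
proof -
  have "1 * 1 \<le> exp 1 * (real N / real s)" using assms by (intro mult_mono) auto
  then show ?thesis by (simp add: one_le_power)
qed

lemma sum_exp_neg_square_le:
  "(\<Sum>i\<in>{-m..m}. exp (- (real_of_int i)\<^sup>2)) \<le> (4::real)"
proof -
  have half: "exp (- (real_of_int i)\<^sup>2) \<le> (1/2) ^ nat \<bar>i\<bar>" for i :: int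
  proof -
    have "\<bar>real_of_int i\<bar> * 1 \<le> \<bar>real_of_int i\<bar> * \<bar>real_of_int i\<bar>"
      by (cases "i = 0") (auto intro!: mult_left_mono simp flip: of_int_abs)
    then have "\<bar>real_of_int i\<bar> \<le> (real_of_int i)\<^sup>2"
      by (simp add: power2_eq_square flip: abs_mult)
    then have "exp (- (real_of_int i)\<^sup>2) \<le> exp (- real (nat \<bar>i\<bar>))" by simp
    also have "\<dots> = exp (-1) ^ nat \<bar>i\<bar>" by (simp add: exp_of_nat_mult[symmetric])
    also have "\<dots> \<le> (1/2) ^ nat \<bar>i\<bar>"
      using exp_ge_add_one_self[of 1] by (intro power_mono) (auto simp: exp_minus field_simps)
    finally show ?thesis .
  qed
  have split: "{-m..m} \<subseteq> uminus ` int ` {0..nat m} \<union> int ` {0..nat m}"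
  proof
    fix i assume "i \<in> {-m..m}"
    then show "i \<in> uminus ` int ` {0..nat m} \<union> int ` {0..nat m}"
      by (cases "i \<ge> 0") (auto intro!: image_eqI[of _ _ "nat \<bar>i\<bar>"] image_eqI[of _ _ "int (nat \<bar>i\<bar>)"])
  qed
  have "(\<Sum>i\<in>{-m..m}. exp (- (real_of_int i)\<^sup>2))
      \<le> (\<Sum>i\<in>uminus ` int ` {0..nat m} \<union> int ` {0..nat m}. exp (- (real_of_int i)\<^sup>2))"
    by (rule sum_mono2[OF _ split]) auto
  also have "\<dots> \<le> (\<Sum>i\<in>uminus ` int ` {0..nat m}. exp (- (real_of_int i)\<^sup>2))
                + (\<Sum>i\<in>int ` {0..nat m}. exp (- (real_of_int i)\<^sup>2))"
    by (subst sum_Un) (auto intro: sum_nonneg)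
  also have "\<dots> = 2 * (\<Sum>k\<in>{0..nat m}. exp (- (real k)\<^sup>2))"
    by (simp add: sum.reindex inj_on_def)
  also have "\<dots> \<le> 2 * (\<Sum>k\<in>{0..nat m}. (1/2::real) ^ k)"
    using half[of "int k" for k] by (intro mult_left_mono sum_mono) auto
  also have "\<dots> \<le> 4"
    using geometric_sum_less[of "1/2::real" "{0..nat m}"] by simp
  finally show ?thesis .
qed

lemma card_lattice_points_le:
  assumes "finite S"
  shows "real (card {k \<in> PiE S (\<lambda>_. {-m..m}). (\<Sum>j\<in>S. (real_of_int (k j))\<^sup>2) \<le> D}) \<le> exp D * 4 ^ card S"
proof -
  let ?P = "PiE S (\<lambda>_. {-m..m})"
  let ?X = "{k \<in> ?P. (\<Sum>j\<in>S. (real_of_int (k j))\<^sup>2) \<le> D}"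
  have "real (card ?X) = (\<Sum>k\<in>?X. 1)" by simp
  also have "\<dots> \<le> (\<Sum>k\<in>?X. exp (D - (\<Sum>j\<in>S. (real_of_int (k j))\<^sup>2)))"
    by (rule sum_mono) auto
  also have "\<dots> \<le> (\<Sum>k\<in>?P. exp (D - (\<Sum>j\<in>S. (real_of_int (k j))\<^sup>2)))"
    using assms by (intro sum_mono2 finite_PiE) auto
  also have "\<dots> = exp D * (\<Sum>k\<in>?P. \<Prod>j\<in>S. exp (- (real_of_int (k j))\<^sup>2))"
  proof -
    have "exp (D - (\<Sum>j\<in>S. (real_of_int (k j))\<^sup>2)) = exp D * (\<Prod>j\<in>S. exp (- (real_of_int (k j))\<^sup>2))" for k
    proof -
      have "exp (D - (\<Sum>j\<in>S. (real_of_int (k j))\<^sup>2)) = exp D * exp (\<Sum>j\<in>S. - (real_of_int (k j))\<^sup>2)"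
        by (simp add: sum_negf exp_add[symmetric])
      then show ?thesis by (simp add: exp_sum[OF assms])
    qed
    then show ?thesis by (simp add: sum_distrib_left)
  qed
  also have "(\<Sum>k\<in>?P. \<Prod>j\<in>S. exp (- (real_of_int (k j))\<^sup>2)) = (\<Prod>j\<in>S. \<Sum>i\<in>{-m..m}. exp (- (real_of_int i)\<^sup>2))"
    by (rule prod_sum_PiE[symmetric]) (use assms in auto)
  also have "\<dots> \<le> (\<Prod>j\<in>S. 4)"
    by (intro prod_mono) (auto intro: sum_nonneg sum_exp_neg_square_le)
  finally show ?thesis by simp
qed

lemma even_power_le_exp_sum:
  fixes y \<theta> :: real
  assumes "\<theta> > 0"
  shows "y ^ (2*k) \<le> fact (2*k) / \<theta> ^ (2*k) * (exp (\<theta> * y) + exp (-(\<theta> * y)))"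
proof -
  have "(\<theta> * \<bar>y\<bar>) ^ (2*k) / fact (2*k) \<le> exp (\<theta> * \<bar>y\<bar>)"
    using assms by (intro power_div_fact_le_exp) simp
  also have "exp (\<theta> * \<bar>y\<bar>) \<le> exp (\<theta> * y) + exp (-(\<theta> * y))"
    by (cases "y \<ge> 0") (auto simp: abs_if add_increasing add_increasing2)
  finally have "(\<theta> * \<bar>y\<bar>) ^ (2*k) \<le> fact (2*k) * (exp (\<theta> * y) + exp (-(\<theta> * y)))"
    by (simp add: field_simps)
  moreover have "(\<theta> * \<bar>y\<bar>) ^ (2*k) = \<theta> ^ (2*k) * y ^ (2*k)"
    by (simp add: power_mult_distrib power_even_abs)
  ultimately show ?thesis using assms by (simp add: field_simps)
qed

lemma fact_double_le: "fact (2*k) \<le> (4::real) ^ k * fact k * real k ^ k"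
proof -
  have "fact k * fact k * (2*k choose k) = (fact (2*k) :: nat)"
    using binomial_fact_lemma[of k "2*k"] by simp
  then have "fact (2*k) = fact k * fact k * real (2*k choose k)"
    by (metis of_nat_fact of_nat_mult)
  also have "\<dots> \<le> fact k * real k ^ k * 4 ^ k"
  proof (rule mult_mono)
    show "fact k * fact k \<le> fact k * (real k ^ k :: real)"
      using fact_le_power[of k] by (intro mult_left_mono) auto
    have "(2*k choose k) \<le> 2 ^ (2*k)" by (rule binomial_le_pow2)
    also have "(2::nat) ^ (2*k) = 4 ^ k" by (simp add: power_mult)
    finally show "real (2*k choose k) \<le> 4 ^ k" by (metis of_nat_le_iff of_nat_numeral of_nat_power)
  qed auto
  finally show ?thesis by (simp add: mult_ac)
qed

lemma exp_minus_add_le_exp: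
  fixes u :: real
  assumes "0 \<le> u"
  shows "exp (-u) + 2 * u \<le> exp u"
proof -
  define f where "f = (\<lambda>x::real. exp x - exp (-x) - 2 * x)"
  have "f 0 \<le> f u"
  proof (rule DERIV_nonneg_imp_increasing_open[OF assms])
    fix x :: real
    have "(f has_real_derivative (exp x + exp (-x) - 2)) (at x)"
      unfolding f_def by (auto intro!: derivative_eq_intros)
    moreover have "0 \<le> exp x + exp (-x) - 2"
      using exp_ge_add_one_self[of x] exp_ge_add_one_self[of "-x"] by linarith
    ultimately show "\<exists>y. (f has_real_derivative y) (at x) \<and> 0 \<le> y" by blast
  next
    show "continuous_on {0..u} f" unfolding f_def by (intro continuous_intros)
  qed
  then show ?thesis unfolding f_def by simp
qed

lemma ennreal_exp_series:
  fixes x :: real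
  assumes "0 \<le> x"
  shows "ennreal (exp x) = (\<Sum>n. ennreal (x ^ n / fact n))"
proof -
  have s: "(\<lambda>n. x ^ n / fact n) sums exp x"
    using exp_converges[of x] by (simp add: divide_inverse mult.commute scaleR_conv_of_real)
  then have "(\<Sum>n. ennreal (x ^ n / fact n)) = ennreal (\<Sum>n. x ^ n / fact n)"
    by (intro suminf_ennreal2) (use assms in \<open>auto simp: sums_iff\<close>)
  then show ?thesis using s by (simp add: sums_iff)
qed

lemma pow_ratio_le_of_rate:
  fixes s N R :: nat and \<epsilon> a b :: real
  assumes "0 < s" "s \<le> N" "0 < \<epsilon>" "\<epsilon> < 1" "0 < a" "a < b"
    and R: "real R \<ge> inverse (ln (b / a))
      * (4/3 * real s * ln (exp 1 * real N / real s) + 14/3 * real s + 4/3 * ln (2 / \<epsilon>))"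
  shows "2 * (exp 1 * real N / real s) ^ s * exp (7 * real s / 2) * (a / b) ^ R \<le> \<epsilon>"
proof -
  define B where "B = exp 1 * real N / real s"
  define \<Lambda> where "\<Lambda> = ln (b / a)"
  have "\<Lambda> > 0" using assms by (simp add: \<Lambda>_def)
  have "B \<ge> exp 1" unfolding B_def using assms by (simp add: field_simps)
  then have "B > 0" "ln B \<ge> 1" using exp_gt_zero[of 1] ln_ge_iff[of B 1] by linarith+
  define Y where "Y = real s * ln B + 7 * real s / 2 + ln (2 / \<epsilon>)"
  have "Y \<ge> 0" unfolding Y_def using \<open>ln B \<ge> 1\<close> assms by (simp add: add_nonneg_nonneg)
  have "inverse \<Lambda> * (4/3 * Y) * \<Lambda> \<le> real R * \<Lambda>"
    using mult_right_mono[OF R less_imp_le[OF \<open>\<Lambda> > 0\<close>]]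
    by (simp add: \<Lambda>_def[symmetric] B_def Y_def algebra_simps)
  then have "real R * \<Lambda> \<ge> 4/3 * Y" using \<open>\<Lambda> > 0\<close> by (simp add: field_simps)
  then have "Y \<le> real R * \<Lambda>" using \<open>Y \<ge> 0\<close> by linarith
  have "ln (a / b) = - \<Lambda>" using assms by (simp add: \<Lambda>_def ln_div)
  then have "(a / b) ^ R = exp (- (real R * \<Lambda>))"
    using assms by (metis exp_ln exp_of_nat_mult divide_pos_pos order.strict_trans mult_minus_right)
  also have "\<dots> \<le> exp (- Y)" using \<open>Y \<le> real R * \<Lambda>\<close> by simp
  also have "\<dots> = \<epsilon> / (2 * B ^ s * exp (7 * real s / 2))"
  proof -
    have "exp (real s * ln B) = B ^ s" using \<open>B > 0\<close> by (simp add: exp_of_nat_mult)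
    moreover have "exp (ln (2 / \<epsilon>)) = 2 / \<epsilon>" using assms by simp
    ultimately show ?thesis
      unfolding Y_def minus_add_distrib exp_add by (simp add: exp_minus field_simps)
  qed
  finally have "2 * B ^ s * exp (7 * real s / 2) * (a / b) ^ R \<le> \<epsilon>"
    using \<open>B > 0\<close> by (simp add: field_simps)
  then show ?thesis unfolding B_def .
qed

section \<open>Energy of sparse vectors and nets\<close>

text \<open>\<open>energy_dev a t N z\<close> is \<open>|a\<^sub>t z|\<^sup>2 / |t| - |z|\<^sup>2\<close>; the restricted isometry constant of
  \<open>a\<^sub>t / sqrt |t|\<close> is its supremum over the \<open>s\<close>-sparse unit vectors \<open>z\<close>.\<close>

definition row_prod :: "(nat \<Rightarrow> nat \<Rightarrow> real) \<Rightarrow> nat \<Rightarrow> nat \<Rightarrow> (nat \<Rightarrow> real) \<Rightarrow> real" where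
  "row_prod a N i z = (\<Sum>j<N. a i j * z j)"

definition norm2 :: "nat \<Rightarrow> (nat \<Rightarrow> real) \<Rightarrow> real" where
  "norm2 N z = (\<Sum>j<N. (z j)\<^sup>2)"

definition energy_dev :: "(nat \<Rightarrow> nat \<Rightarrow> real) \<Rightarrow> nat set \<Rightarrow> nat \<Rightarrow> (nat \<Rightarrow> real) \<Rightarrow> real" where
  "energy_dev a t N z = (\<Sum>i\<in>t. (row_prod a N i z)\<^sup>2) / real (card t) - norm2 N z"

lemma row_prod_scale: "row_prod a N i (\<lambda>j. \<alpha> * u j) = \<alpha> * row_prod a N i u"
  unfolding row_prod_def by (simp add: algebra_simps sum_distrib_left)

lemma row_prod_sq_le:
  assumes "\<And>j. j < N \<Longrightarrow> \<bar>z j\<bar> \<le> 1"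
  shows "(row_prod a N i z)\<^sup>2 \<le> (\<Sum>j<N. \<bar>a i j\<bar>)\<^sup>2"
proof -
  have "\<bar>row_prod a N i z\<bar> \<le> (\<Sum>j<N. \<bar>a i j * z j\<bar>)" unfolding row_prod_def by (rule sum_abs)
  also have "\<dots> \<le> (\<Sum>j<N. \<bar>a i j\<bar>)"
    using assms by (intro sum_mono) (auto simp: abs_mult intro: mult_left_le)
  finally show ?thesis by (simp add: abs_le_square_iff[symmetric])
qed

lemma norm2_nonneg: "0 \<le> norm2 N z"
  unfolding norm2_def by (auto intro: sum_nonneg)

lemma norm2_scale: "norm2 N (\<lambda>j. \<alpha> * u j) = \<alpha>\<^sup>2 * norm2 N u"
  unfolding norm2_def by (simp add: power_mult_distrib sum_distrib_left)

lemma norm2_eq_0_iff: "norm2 N z = 0 \<longleftrightarrow> (\<forall>j<N. z j = 0)"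
  unfolding norm2_def by (subst sum_nonneg_eq_0_iff) auto

lemma abs_le_1_if_norm2_eq_1:
  assumes "norm2 N z = 1" "j < N"
  shows "\<bar>z j\<bar> \<le> 1"
proof -
  have "(z j)\<^sup>2 \<le> norm2 N z" unfolding norm2_def using assms(2) by (intro member_le_sum) auto
  then show ?thesis using assms(1) by (simp add: abs_square_le_1)
qed

lemma norm2_unit_vector:
  assumes "i < N"
  shows "norm2 N (\<lambda>j. if j = i then 1 else 0) = 1"
proof -
  have "norm2 N (\<lambda>j. if j = i then 1 else 0) = (\<Sum>j<N. if j = i then 1 else 0)"
    unfolding norm2_def by (intro sum.cong) auto
  then show ?thesis using assms by simp
qed

lemma norm2_normalize:
  assumes "norm2 N z \<noteq> 0"
  shows "norm2 N (\<lambda>j. z j / sqrt (norm2 N z)) = 1"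
  using norm2_scale[of N "1 / sqrt (norm2 N z)" z] assms norm2_nonneg[of N z]
  by (simp add: power_divide)

lemma norm2_parallelogram:
  fixes \<tau> :: real
  assumes "\<tau> \<noteq> 0"
  shows "norm2 N (\<lambda>j. \<tau> * (z j - x j) + (z j + x j) / \<tau>) + norm2 N (\<lambda>j. \<tau> * (z j - x j) - (z j + x j) / \<tau>)
     = 2 * (\<tau>\<^sup>2 * norm2 N (\<lambda>j. z j - x j) + norm2 N (\<lambda>j. z j + x j) / \<tau>\<^sup>2)"
proof -
  have "(\<tau> * d + e / \<tau>)\<^sup>2 + (\<tau> * d - e / \<tau>)\<^sup>2 = 2 * (\<tau>\<^sup>2 * d\<^sup>2 + e\<^sup>2 / \<tau>\<^sup>2)" for d e :: real
    using assms by (simp add: power2_eq_square field_simps)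
  then show ?thesis
    unfolding norm2_def sum.distrib[symmetric]
    by (simp add: sum_distrib_left sum.distrib sum_divide_distrib)
qed

lemma norm2_add_le: "norm2 N (\<lambda>j. z j + x j) \<le> 2 * norm2 N z + 2 * norm2 N x"
proof -
  have "(z j + x j)\<^sup>2 \<le> 2 * (z j)\<^sup>2 + 2 * (x j)\<^sup>2" for j
    using sum_squares_ge_zero[of "z j - x j" 0] by (simp add: power2_eq_square algebra_simps)
  then have "(\<Sum>j<N. (z j + x j)\<^sup>2) \<le> (\<Sum>j<N. 2 * (z j)\<^sup>2 + 2 * (x j)\<^sup>2)" by (intro sum_mono)
  then show ?thesis unfolding norm2_def by (simp add: sum.distrib sum_distrib_left)
qed

lemma energy_dev_scale: "energy_dev a t N (\<lambda>j. \<alpha> * u j) = \<alpha>\<^sup>2 * energy_dev a t N u"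
  unfolding energy_dev_def
  by (simp add: row_prod_scale norm2_scale power_mult_distrib sum_distrib_left algebra_simps diff_divide_distrib)

lemma energy_dev_eq_0:
  assumes "\<And>j. j < N \<Longrightarrow> z j = 0"
  shows "energy_dev a t N z = 0"
  using assms unfolding energy_dev_def row_prod_def norm2_def by simp

lemma energy_dev_normalize:
  "energy_dev a t N z = norm2 N z * energy_dev a t N (\<lambda>j. z j / sqrt (norm2 N z))"
proof (cases "norm2 N z = 0")
  case True
  then show ?thesis by (simp add: energy_dev_eq_0 norm2_eq_0_iff)
next
  case False
  then have "z = (\<lambda>j. sqrt (norm2 N z) * (z j / sqrt (norm2 N z)))" by auto
  then have "energy_dev a t N z = (sqrt (norm2 N z))\<^sup>2 * energy_dev a t N (\<lambda>j. z j / sqrt (norm2 N z))"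
    by (metis energy_dev_scale)
  then show ?thesis using norm2_nonneg[of N z] by simp
qed

lemma energy_dev_polarization:
  fixes \<tau> :: real
  assumes "\<tau> \<noteq> 0"
  shows "energy_dev a t N (\<lambda>j. \<tau> * (z j - x j) + (z j + x j) / \<tau>)
       - energy_dev a t N (\<lambda>j. \<tau> * (z j - x j) - (z j + x j) / \<tau>)
       = 4 * (energy_dev a t N z - energy_dev a t N x)"
proof -
  have sq: "(\<tau> * (\<alpha> - \<beta>) + (\<alpha> + \<beta>) / \<tau>)\<^sup>2 - (\<tau> * (\<alpha> - \<beta>) - (\<alpha> + \<beta>) / \<tau>)\<^sup>2 = 4 * (\<alpha>\<^sup>2 - \<beta>\<^sup>2)"
    for \<alpha> \<beta> :: real
    using assms by (simp add: power2_eq_square field_simps)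
  have row_p: "row_prod a N i (\<lambda>j. \<tau> * (z j - x j) + (z j + x j) / \<tau>)
      = \<tau> * (row_prod a N i z - row_prod a N i x) + (row_prod a N i z + row_prod a N i x) / \<tau>" for i
    unfolding row_prod_def
    by (simp add: sum.distrib sum_subtractf sum_divide_distrib add_divide_distrib sum_distrib_left algebra_simps)
  have row_m: "row_prod a N i (\<lambda>j. \<tau> * (z j - x j) - (z j + x j) / \<tau>)
      = \<tau> * (row_prod a N i z - row_prod a N i x) - (row_prod a N i z + row_prod a N i x) / \<tau>" for i
    unfolding row_prod_def
    by (simp add: sum.distrib sum_subtractf sum_divide_distrib add_divide_distrib sum_distrib_left algebra_simps)
  have rows: "(\<Sum>i\<in>t. (row_prod a N i (\<lambda>j. \<tau> * (z j - x j) + (z j + x j) / \<tau>))\<^sup>2)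
      - (\<Sum>i\<in>t. (row_prod a N i (\<lambda>j. \<tau> * (z j - x j) - (z j + x j) / \<tau>))\<^sup>2)
      = 4 * ((\<Sum>i\<in>t. (row_prod a N i z)\<^sup>2) - (\<Sum>i\<in>t. (row_prod a N i x)\<^sup>2))"
    by (simp add: row_p row_m sq sum_distrib_left flip: sum_subtractf)
  have norms: "norm2 N (\<lambda>j. \<tau> * (z j - x j) + (z j + x j) / \<tau>)
      - norm2 N (\<lambda>j. \<tau> * (z j - x j) - (z j + x j) / \<tau>) = 4 * (norm2 N z - norm2 N x)"
    unfolding norm2_def by (simp add: sq sum_distrib_left flip: sum_subtractf)
  have "(P / n - A) - (Q / n - B) = 4 * ((Z / n - C) - (X / n - D))"
    if "P - Q = 4 * (Z - X)" "A - B = 4 * (C - D)" for A B C D P Q Z X n :: real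
  proof -
    have "P / n - Q / n = 4 * (Z / n - X / n)"
      using that(1) by (metis diff_divide_distrib times_divide_eq_right)
    then show ?thesis using that(2) by (simp add: algebra_simps)
  qed
  from this[OF rows norms] show ?thesis unfolding energy_dev_def .
qed

text \<open>A net for the unit vectors supported on an \<open>s\<close>-set \<open>S\<close>: integer multiples of the mesh
  \<open>1/(10 sqrt s)\<close>. Rounding a unit vector to this mesh costs at most \<open>1/400\<close> in squared norm, so
  the rounded vector has squared norm at most \<open>2 + 2/400\<close>, i.e. integer coefficients with
  \<open>\<Sum> k\<^sub>j\<^sup>2 \<le> 201 s\<close> and \<open>\<bar>k\<^sub>j\<bar> \<le> 10 sqrt s + 1/2 \<le> 11 s\<close>.\<close>

definition net_step :: "nat \<Rightarrow> real" where
  "net_step s = 1 / (10 * sqrt (real s))"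

definition net_point :: "nat set \<Rightarrow> nat \<Rightarrow> (nat \<Rightarrow> int) \<Rightarrow> nat \<Rightarrow> real" where
  "net_point S s k = (\<lambda>j. if j \<in> S then net_step s * of_int (k j) else 0)"

definition net_index :: "nat set \<Rightarrow> nat \<Rightarrow> (nat \<Rightarrow> int) set" where
  "net_index S s = {k \<in> PiE S (\<lambda>_. {- int (11 * s) .. int (11 * s)}).
     (\<Sum>j\<in>S. (real_of_int (k j))\<^sup>2) \<le> 201 * real s}"

lemma finite_net_index:
  assumes "finite S"
  shows "finite (net_index S s)"
proof -
  have "net_index S s \<subseteq> PiE S (\<lambda>_. {- int (11 * s) .. int (11 * s)})"
    unfolding net_index_def by auto
  then show ?thesis using assms by (intro finite_subset[OF _ finite_PiE]) auto
qed

lemma card_net_index_le: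
  assumes "finite S" "card S = s"
  shows "real (card (net_index S s)) \<le> exp (201 * real s) * 4 ^ s"
  using card_lattice_points_le[OF assms(1), of "int (11 * s)" "201 * real s"] assms
  unfolding net_index_def by simp

lemma norm2_eq_sum_support:
  assumes "S \<subseteq> {..<N}" "\<And>j. j \<notin> S \<Longrightarrow> w j = 0"
  shows "norm2 N w = (\<Sum>j\<in>S. (w j)\<^sup>2)"
  unfolding norm2_def using assms by (intro sum.mono_neutral_right) auto

lemma abs_diff_round_le:
  fixes h x :: real
  assumes "h > 0"
  shows "\<bar>x - h * of_int (round (x / h))\<bar> \<le> h / 2"
proof -
  have "h * \<bar>of_int (round (x / h)) - x / h\<bar> = \<bar>h * (of_int (round (x / h)) - x / h)\<bar>"
    using assms by (simp add: abs_mult)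
  also have "h * (of_int (round (x / h)) - x / h) = - (x - h * of_int (round (x / h)))"
    using assms by (simp add: field_simps)
  finally have "\<bar>x - h * of_int (round (x / h))\<bar> = h * \<bar>of_int (round (x / h)) - x / h\<bar>" by simp
  also have "\<dots> \<le> h * (1/2)"
    using assms by (intro mult_left_mono of_int_round_abs_le) auto
  finally show ?thesis by simp
qed

lemma abs_round_div_net_step_le:
  assumes "0 < s" "\<bar>x\<bar> \<le> 1"
  shows "\<bar>round (x / net_step s)\<bar> \<le> int (11 * s)"
proof -
  have "\<bar>x / net_step s\<bar> \<le> 10 * sqrt (real s)"
    using assms by (simp add: net_step_def abs_mult)
  moreover have "sqrt (real s) \<le> real s"
  proof -
    have "1 \<le> sqrt (real s)" using assms by simp
    then have "sqrt (real s) * 1 \<le> sqrt (real s) * sqrt (real s)" by (intro mult_left_mono) auto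
    then show ?thesis by simp
  qed
  ultimately have "\<bar>real_of_int (round (x / net_step s))\<bar> \<le> 11 * real s"
    using of_int_round_abs_le[of "x / net_step s"] assms by linarith
  then have "real_of_int \<bar>round (x / net_step s)\<bar> \<le> real_of_int (int (11 * s))" by simp
  then show ?thesis by (simp only: of_int_le_iff)
qed

definition net_round :: "nat set \<Rightarrow> nat \<Rightarrow> (nat \<Rightarrow> real) \<Rightarrow> nat \<Rightarrow> int" where
  "net_round S s z = restrict (\<lambda>j. round (z j / net_step s)) S"

lemma norm2_diff_net_round_le:
  assumes S: "S \<subseteq> {..<N}" "card S = s" "s > 0" and z: "\<And>j. j \<notin> S \<Longrightarrow> z j = 0"
  shows "norm2 N (\<lambda>j. z j - net_point S s (net_round S s z) j) \<le> 1/400"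
proof -
  define h where "h = net_step s"
  have h: "h > 0" "h\<^sup>2 = 1 / (100 * real s)"
    using S(3) unfolding h_def net_step_def by (simp_all add: power2_eq_square)
  have point: "net_point S s (net_round S s z) j = (if j \<in> S then h * of_int (round (z j / h)) else 0)" for j
    unfolding net_point_def net_round_def h_def by simp
  have "norm2 N (\<lambda>j. z j - net_point S s (net_round S s z) j) = (\<Sum>j\<in>S. (z j - h * of_int (round (z j / h)))\<^sup>2)"
    by (subst norm2_eq_sum_support[OF S(1)]) (simp_all add: z point)
  also have "\<dots> \<le> (\<Sum>j\<in>S. (h/2)\<^sup>2)"
    using abs_diff_round_le[OF h(1)] h(1) by (intro sum_mono) (simp flip: abs_le_square_iff)
  also have "\<dots> = 1/400" using h(2) S by (simp add: power_divide)
  finally show ?thesis .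
qed

lemma net_round_mem_net_index:
  assumes S: "S \<subseteq> {..<N}" "card S = s" "s > 0"
    and z: "\<And>j. j \<notin> S \<Longrightarrow> z j = 0" "norm2 N z = 1"
  shows "net_round S s z \<in> net_index S s" and "norm2 N (net_point S s (net_round S s z)) \<le> 2 + 2/400"
proof -
  let ?k = "net_round S s z"
  have "norm2 N (\<lambda>j. z j - net_point S s ?k j) = norm2 N (\<lambda>j. net_point S s ?k j - z j)"
    unfolding norm2_def by (simp add: power2_commute)
  then show small: "norm2 N (net_point S s ?k) \<le> 2 + 2/400"
    using norm2_add_le[of N z "\<lambda>j. net_point S s ?k j - z j"] norm2_diff_net_round_le[where z=z, OF S z(1)] z(2)
    by simp
  have "?k j \<in> {- int (11 * s) .. int (11 * s)}" if "j \<in> S" for j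
  proof -
    have "j < N" using S(1) that by auto
    then have "\<bar>round (z j / net_step s)\<bar> \<le> int (11 * s)"
      by (rule abs_round_div_net_step_le[OF S(3) abs_le_1_if_norm2_eq_1[OF z(2)]])
    then show ?thesis using that by (simp add: net_round_def abs_le_iff)
  qed
  then have "?k \<in> PiE S (\<lambda>_. {- int (11 * s) .. int (11 * s)})"
    by (auto simp: PiE_iff net_round_def)
  moreover have "(\<Sum>j\<in>S. (real_of_int (?k j))\<^sup>2) \<le> 201 * real s"
  proof -
    have "(net_step s)\<^sup>2 * (\<Sum>j\<in>S. (real_of_int (?k j))\<^sup>2) = norm2 N (net_point S s ?k)"
      by (subst norm2_eq_sum_support[OF S(1)])
        (auto simp: net_point_def power_mult_distrib sum_distrib_left)
    moreover have "(net_step s)\<^sup>2 = 1 / (100 * real s)"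
      using S(3) by (simp add: net_step_def power2_eq_square)
    ultimately show ?thesis using small S by (simp add: field_simps)
  qed
  ultimately show "?k \<in> net_index S s" unfolding net_index_def by blast
qed

lemma abs_energy_dev_le:
  assumes "norm2 N z = 1"
  shows "\<bar>energy_dev a t N z\<bar> \<le> (\<Sum>i\<in>t. (\<Sum>j<N. \<bar>a i j\<bar>)\<^sup>2) / real (card t) + 1"
proof -
  have "(\<Sum>i\<in>t. (row_prod a N i z)\<^sup>2) / real (card t) \<le> (\<Sum>i\<in>t. (\<Sum>j<N. \<bar>a i j\<bar>)\<^sup>2) / real (card t)"
    using assms by (intro divide_right_mono sum_mono row_prod_sq_le abs_le_1_if_norm2_eq_1) auto
  moreover have "0 \<le> (\<Sum>i\<in>t. (row_prod a N i z)\<^sup>2) / real (card t)"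
    by (intro divide_nonneg_nonneg sum_nonneg) auto
  ultimately show ?thesis using assms unfolding energy_dev_def by auto
qed

lemma abs_energy_dev_le_mult_norm2:
  assumes unit: "\<And>u. (\<And>j. j \<notin> S \<Longrightarrow> u j = 0) \<Longrightarrow> norm2 N u = 1 \<Longrightarrow> \<bar>energy_dev a t N u\<bar> \<le> M"
    and "0 \<le> M" and w: "\<And>j. j \<notin> S \<Longrightarrow> w j = 0"
  shows "\<bar>energy_dev a t N w\<bar> \<le> M * norm2 N w"
proof (cases "norm2 N w = 0")
  case True
  then show ?thesis by (subst energy_dev_normalize) simp
next
  case False
  then have "\<bar>energy_dev a t N (\<lambda>j. w j / sqrt (norm2 N w))\<bar> \<le> M"
    using w norm2_normalize by (intro unit) auto
  then have "norm2 N w * \<bar>energy_dev a t N (\<lambda>j. w j / sqrt (norm2 N w))\<bar> \<le> norm2 N w * M"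
    by (rule mult_left_mono) (rule norm2_nonneg)
  then show ?thesis
    by (subst energy_dev_normalize) (simp add: abs_mult norm2_nonneg mult.commute)
qed

text \<open>The perturbation step of the net argument: with \<open>\<tau> = 7\<close> the polarization identity writes
  \<open>4 (energy_dev y - energy_dev x)\<close> as a difference of two values of \<open>energy_dev\<close> at vectors
  whose squared norms add up to at most \<open>1/2\<close>.\<close>

lemma abs_energy_dev_diff_le:
  assumes unit: "\<And>u. (\<And>j. j \<notin> S \<Longrightarrow> u j = 0) \<Longrightarrow> norm2 N u = 1 \<Longrightarrow> \<bar>energy_dev a t N u\<bar> \<le> M"
    and "0 \<le> M"
    and y: "\<And>j. j \<notin> S \<Longrightarrow> y j = 0" "norm2 N y = 1"
    and x: "\<And>j. j \<notin> S \<Longrightarrow> x j = 0" "norm2 N x \<le> 2 + 2/400"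
    and close: "norm2 N (\<lambda>j. y j - x j) \<le> 1/400"
  shows "\<bar>energy_dev a t N y - energy_dev a t N x\<bar> \<le> M / 8"
proof -
  define \<tau> :: real where "\<tau> = 7"
  define p where "p = (\<lambda>j. \<tau> * (y j - x j) + (y j + x j) / \<tau>)"
  define q where "q = (\<lambda>j. \<tau> * (y j - x j) - (y j + x j) / \<tau>)"
  have "norm2 N p + norm2 N q = 2 * (\<tau>\<^sup>2 * norm2 N (\<lambda>j. y j - x j) + norm2 N (\<lambda>j. y j + x j) / \<tau>\<^sup>2)"
    unfolding p_def q_def by (rule norm2_parallelogram) (simp add: \<tau>_def)
  also have "\<dots> \<le> 2 * (49 * (1/400) + (2 + 2 * (2 + 2/400)) / 49)"
    using close norm2_add_le[of N y x] y(2) x(2) unfolding \<tau>_def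
    by (intro mult_left_mono add_mono divide_right_mono) auto
  finally have pq: "norm2 N p + norm2 N q \<le> 1/2" by simp
  have "energy_dev a t N p - energy_dev a t N q = 4 * (energy_dev a t N y - energy_dev a t N x)"
    unfolding p_def q_def by (rule energy_dev_polarization) (simp add: \<tau>_def)
  then have "4 * \<bar>energy_dev a t N y - energy_dev a t N x\<bar> = \<bar>energy_dev a t N p - energy_dev a t N q\<bar>"
    by (metis abs_mult abs_numeral)
  also have "\<dots> \<le> M * norm2 N p + M * norm2 N q"
    using abs_energy_dev_le_mult_norm2[where S=S and w=p, OF unit \<open>0 \<le> M\<close>]
      abs_energy_dev_le_mult_norm2[where S=S and w=q, OF unit \<open>0 \<le> M\<close>]
      x(1) y(1) unfolding p_def q_def by auto
  also have "\<dots> = M * (norm2 N p + norm2 N q)" by (simp add: distrib_left)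
  also have "\<dots> \<le> M * (1/2)" using pq \<open>0 \<le> M\<close> by (rule mult_left_mono)
  finally show ?thesis by simp
qed

lemma abs_energy_dev_le_of_net:
  assumes S: "S \<subseteq> {..<N}" "card S = s" "s > 0" and "0 \<le> \<eta>"
    and net: "\<And>k. k \<in> net_index S s \<Longrightarrow>
      \<bar>energy_dev a t N (net_point S s k)\<bar> \<le> \<eta> * norm2 N (net_point S s k)"
    and z: "\<And>j. j \<notin> S \<Longrightarrow> z j = 0" "norm2 N z = 1"
  shows "\<bar>energy_dev a t N z\<bar> \<le> 3 * \<eta>"
proof -
  define Z where "Z = {z. (\<forall>j. j \<notin> S \<longrightarrow> z j = 0) \<and> norm2 N z = 1}"
  define M where "M = (SUP z\<in>Z. \<bar>energy_dev a t N z\<bar>)"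
  have "bdd_above ((\<lambda>z. \<bar>energy_dev a t N z\<bar>) ` Z)"
    using abs_energy_dev_le unfolding Z_def by (intro bdd_aboveI) blast
  then have le_M: "\<bar>energy_dev a t N y\<bar> \<le> M" if "y \<in> Z" for y
    unfolding M_def using that by (rule cSUP_upper2) simp
  obtain j0 where "j0 \<in> S" using S by fastforce
  then have "(\<lambda>j. if j = j0 then 1 else 0) \<in> Z"
    using S(1) norm2_unit_vector[of j0 N] by (auto simp: Z_def)
  then have "Z \<noteq> {}" and "0 \<le> M" using le_M by (force, fastforce)
  have "\<bar>energy_dev a t N y\<bar> \<le> (2 + 2/400) * \<eta> + M / 8" if "y \<in> Z" for y
  proof -
    have y: "\<And>j. j \<notin> S \<Longrightarrow> y j = 0" "norm2 N y = 1" using that by (auto simp: Z_def)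
    define k where "k = net_round S s y"
    have k: "k \<in> net_index S s" "norm2 N (\<lambda>j. y j - net_point S s k j) \<le> 1/400"
        "norm2 N (net_point S s k) \<le> 2 + 2/400"
      unfolding k_def using net_round_mem_net_index[OF S y] norm2_diff_net_round_le[where z=y, OF S y(1)] by auto
    have "\<bar>energy_dev a t N (net_point S s k)\<bar> \<le> (2 + 2/400) * \<eta>"
      using net[OF k(1)] mult_left_mono[OF k(3) \<open>0 \<le> \<eta>\<close>] by (simp add: mult.commute)
    moreover have "\<bar>energy_dev a t N y - energy_dev a t N (net_point S s k)\<bar> \<le> M / 8"
      using abs_energy_dev_diff_le[where S=S, OF le_M[unfolded Z_def] \<open>0 \<le> M\<close> y _ k(3,2)]
      by (simp add: net_point_def)
    ultimately show ?thesis by linarith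
  qed
  then have "M \<le> (2 + 2/400) * \<eta> + M / 8"
    unfolding M_def using \<open>Z \<noteq> {}\<close> by (intro cSUP_least) auto
  then have "M \<le> 3 * \<eta>" using \<open>0 \<le> \<eta>\<close> by simp
  moreover have "z \<in> Z" using z by (auto simp: Z_def)
  ultimately show ?thesis using le_M by fastforce
qed

section \<open>The restricted isometry constant\<close>

lemma sq_norm_image_eq_row_prod: "sq_norm_image B I N z = (\<Sum>i\<in>I. (row_prod B N i z)\<^sup>2)"
  unfolding sq_norm_image_def row_prod_def ..

lemma sq_norm_image_scale: "sq_norm_image B I N (\<lambda>j. \<alpha> * z j) = \<alpha>\<^sup>2 * sq_norm_image B I N z"
  by (simp add: sq_norm_image_eq_row_prod row_prod_scale power_mult_distrib sum_distrib_left)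

lemma sq_norm_image_normalize:
  "sq_norm_image B I N z = norm2 N z * sq_norm_image B I N (\<lambda>j. z j / sqrt (norm2 N z))"
proof (cases "norm2 N z = 0")
  case True
  then show ?thesis by (simp add: sq_norm_image_eq_row_prod row_prod_def norm2_eq_0_iff)
next
  case False
  then have "z = (\<lambda>j. sqrt (norm2 N z) * (z j / sqrt (norm2 N z)))" by auto
  then have "sq_norm_image B I N z = (sqrt (norm2 N z))\<^sup>2 * sq_norm_image B I N (\<lambda>j. z j / sqrt (norm2 N z))"
    by (metis sq_norm_image_scale)
  then show ?thesis using norm2_nonneg[of N z] by simp
qed

lemma sq_norm_image_over_sqrt_card:
  "sq_norm_image (\<lambda>i j. a i j / sqrt (real (card t))) t N z = energy_dev a t N z + norm2 N z"
  by (simp add: energy_dev_def sq_norm_image_eq_row_prod row_prod_def sum_divide_distrib power_divide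
      flip: sum_divide_distrib)

lemma sparse_unit_iff: "sparse_unit N s z \<longleftrightarrow>
    (\<forall>j\<ge>N. z j = 0) \<and> norm2 N z = 1 \<and> card {j\<in>{..<N}. z j \<noteq> 0} \<le> s"
  unfolding sparse_unit_def norm2_def ..

definition ric_bounds :: "(nat \<Rightarrow> nat \<Rightarrow> real) \<Rightarrow> nat set \<Rightarrow> nat \<Rightarrow> nat \<Rightarrow> real set" where
  "ric_bounds B I N s = {d. \<forall>z. sparse_unit N s z \<longrightarrow>
       1 - d \<le> sq_norm_image B I N z \<and> sq_norm_image B I N z \<le> 1 + d}"

lemma ric_eq_Inf_ric_bounds: "ric B I N s = Inf (ric_bounds B I N s)"
  unfolding ric_def ric_bounds_def ..

lemma ric_bounds_mono: "d \<in> ric_bounds B I N s \<Longrightarrow> d \<le> d' \<Longrightarrow> d' \<in> ric_bounds B I N s"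
  unfolding ric_bounds_def by force

lemma bdd_below_ric_bounds:
  assumes "N > 0" "s > 0"
  shows "bdd_below (ric_bounds B I N s)"
proof (rule bdd_belowI)
  fix d assume "d \<in> ric_bounds B I N s"
  moreover have "sparse_unit N s (\<lambda>j. if j = 0 then 1 else 0)"
    using assms norm2_unit_vector[of 0 N]
    by (auto simp: sparse_unit_iff intro: order.trans[OF card_mono[of "{0}"]])
  ultimately show "0 \<le> d" unfolding ric_bounds_def by fastforce
qed

lemma ric_bounds_nonempty: "ric_bounds B I N s \<noteq> {}"
proof -
  define b where "b = (\<Sum>i\<in>I. (\<Sum>j<N. \<bar>B i j\<bar>)\<^sup>2)"
  have "0 \<le> sq_norm_image B I N z \<and> sq_norm_image B I N z \<le> b" if "sparse_unit N s z" for z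
    using that unfolding sq_norm_image_eq_row_prod b_def sparse_unit_iff
    by (cases "finite I") (auto intro!: sum_nonneg sum_mono row_prod_sq_le abs_le_1_if_norm2_eq_1)
  then have "b + 1 \<in> ric_bounds B I N s" unfolding ric_bounds_def by force
  then show ?thesis by blast
qed

lemma ric_le:
  assumes "N > 0" "s > 0"
    and "\<And>z. sparse_unit N s z \<Longrightarrow> \<bar>sq_norm_image B I N z - 1\<bar> \<le> d"
  shows "ric B I N s \<le> d"
proof -
  have "d \<in> ric_bounds B I N s" unfolding ric_bounds_def using assms(3) by (force simp: abs_le_iff)
  then show ?thesis unfolding ric_eq_Inf_ric_bounds by (intro cInf_lower bdd_below_ric_bounds assms)
qed

lemma ric_cong:
  assumes "\<And>i j. i \<in> I \<Longrightarrow> j < N \<Longrightarrow> B i j = B' i j"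
  shows "ric B I N s = ric B' I N s"
proof -
  have "sq_norm_image B I N z = sq_norm_image B' I N z" for z
    unfolding sq_norm_image_def using assms by (intro sum.cong refl arg_cong[where f="\<lambda>x. x\<^sup>2"]) auto
  then show ?thesis unfolding ric_def by simp
qed

text \<open>A countable description of \<open>ric B I N s < \<delta>\<close> (rational bounds, rational test vectors),
  from which the measurability of this event in the entries of \<open>B\<close> follows.\<close>

definition rat_vec :: "nat \<Rightarrow> rat list \<Rightarrow> nat \<Rightarrow> real" where
  "rat_vec N l = (\<lambda>j. if j < length l \<and> j < N then of_rat (l ! j) else 0)"

definition ric_rat_bound :: "(nat \<Rightarrow> nat \<Rightarrow> real) \<Rightarrow> nat set \<Rightarrow> nat \<Rightarrow> nat \<Rightarrow> rat \<Rightarrow> bool" where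
  "ric_rat_bound B I N s r \<longleftrightarrow> (\<forall>l. card {j\<in>{..<N}. rat_vec N l j \<noteq> 0} \<le> s \<longrightarrow>
      (1 - of_rat r) * norm2 N (rat_vec N l) \<le> sq_norm_image B I N (rat_vec N l) \<and>
      sq_norm_image B I N (rat_vec N l) \<le> (1 + of_rat r) * norm2 N (rat_vec N l))"

lemma ric_rat_bound_if_mem:
  assumes "of_rat r \<in> ric_bounds B I N s"
  shows "ric_rat_bound B I N s r"
  unfolding ric_rat_bound_def
proof (intro allI impI)
  fix l assume card: "card {j\<in>{..<N}. rat_vec N l j \<noteq> 0} \<le> s"
  define v where "v = rat_vec N l"
  define u where "u = (\<lambda>j. v j / sqrt (norm2 N v))"
  have "1 - of_rat r \<le> sq_norm_image B I N u \<and> sq_norm_image B I N u \<le> 1 + of_rat r"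
    if "norm2 N v \<noteq> 0"
  proof -
    have "{j\<in>{..<N}. u j \<noteq> 0} = {j\<in>{..<N}. v j \<noteq> 0}"
      using that norm2_nonneg[of N v] by (auto simp: u_def)
    then have "sparse_unit N s u"
      using card norm2_normalize[OF that] by (auto simp: sparse_unit_iff u_def v_def rat_vec_def)
    then show ?thesis using assms unfolding ric_bounds_def by blast
  qed
  then show "(1 - of_rat r) * norm2 N v \<le> sq_norm_image B I N v \<and>
      sq_norm_image B I N v \<le> (1 + of_rat r) * norm2 N v"
    unfolding sq_norm_image_normalize[of B I N v] u_def[symmetric]
    by (cases "norm2 N v = 0") (auto simp: mult.commute norm2_nonneg intro: mult_left_mono)
qed

definition rat_approx :: "nat \<Rightarrow> real \<Rightarrow> rat" where
  "rat_approx k x = of_int \<lfloor>x * real (Suc k)\<rfloor> / of_nat (Suc k)"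

lemma rat_approx_0 [simp]: "rat_approx k 0 = 0"
  unfolding rat_approx_def by simp

lemma rat_approx_tendsto: "(\<lambda>k. real_of_rat (rat_approx k x)) \<longlonglongrightarrow> x"
proof (rule tendsto_sandwich[of "\<lambda>k. x - inverse (real (Suc k))" _ _ "\<lambda>k. x"])
  have eq: "real_of_rat (rat_approx k x) = of_int \<lfloor>x * real (Suc k)\<rfloor> / real (Suc k)" for k
    unfolding rat_approx_def of_rat_divide of_rat_of_int_eq of_rat_of_nat_eq ..
  show "\<forall>\<^sub>F k in sequentially. x - inverse (real (Suc k)) \<le> real_of_rat (rat_approx k x)"
  proof (intro always_eventually allI)
    fix k
    have "(x * real (Suc k) - 1) / real (Suc k) \<le> of_int \<lfloor>x * real (Suc k)\<rfloor> / real (Suc k)"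
      using real_of_int_floor_gt_diff_one[of "x * real (Suc k)"] by (intro divide_right_mono) auto
    then show "x - inverse (real (Suc k)) \<le> real_of_rat (rat_approx k x)"
      by (simp add: eq diff_divide_distrib inverse_eq_divide del: of_nat_Suc)
  qed
  show "\<forall>\<^sub>F k in sequentially. real_of_rat (rat_approx k x) \<le> x"
    by (intro always_eventually allI) (simp add: eq field_simps del: of_nat_Suc)
  show "(\<lambda>k. x - inverse (real (Suc k))) \<longlonglongrightarrow> x"
    using tendsto_diff[OF tendsto_const LIMSEQ_inverse_real_of_nat, of x] by simp
qed simp

lemma mem_ric_bounds_if_rat_bound:
  assumes "ric_rat_bound B I N s r"
  shows "of_rat r \<in> ric_bounds B I N s"
  unfolding ric_bounds_def mem_Collect_eq
proof (intro allI impI)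
  fix z assume z: "sparse_unit N s z"
  define l where "l = (\<lambda>k. map (\<lambda>j. rat_approx k (z j)) [0..<N])"
  have vec: "rat_vec N (l k) j = (if j < N then of_rat (rat_approx k (z j)) else 0)" for k j
    by (auto simp: rat_vec_def l_def)
  have lim: "(\<lambda>k. rat_vec N (l k) j) \<longlonglongrightarrow> z j" if "j < N" for j
    using that by (simp add: vec rat_approx_tendsto)
  have "card {j\<in>{..<N}. rat_vec N (l k) j \<noteq> 0} \<le> card {j\<in>{..<N}. z j \<noteq> 0}" for k
    by (rule card_mono) (auto simp: vec)
  then have "card {j\<in>{..<N}. rat_vec N (l k) j \<noteq> 0} \<le> s" for k
    using z unfolding sparse_unit_def by (meson order_trans)
  then have ineq: "(1 - of_rat r) * norm2 N (rat_vec N (l k)) \<le> sq_norm_image B I N (rat_vec N (l k))"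
     "sq_norm_image B I N (rat_vec N (l k)) \<le> (1 + of_rat r) * norm2 N (rat_vec N (l k))" for k
    using assms unfolding ric_rat_bound_def by blast+
  have norm: "(\<lambda>k. \<rho> * norm2 N (rat_vec N (l k))) \<longlonglongrightarrow> \<rho> * norm2 N z" for \<rho>
    unfolding norm2_def by (intro tendsto_intros lim) simp
  have img: "(\<lambda>k. sq_norm_image B I N (rat_vec N (l k))) \<longlonglongrightarrow> sq_norm_image B I N z"
    unfolding sq_norm_image_def by (intro tendsto_intros lim) simp
  have "(1 - of_rat r) * norm2 N z \<le> sq_norm_image B I N z"
    by (rule tendsto_le[OF _ img norm]) (auto intro: always_eventually ineq)
  moreover have "sq_norm_image B I N z \<le> (1 + of_rat r) * norm2 N z"
    by (rule tendsto_le[OF _ norm img]) (auto intro: always_eventually ineq)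
  ultimately show "1 - real_of_rat r \<le> sq_norm_image B I N z \<and> sq_norm_image B I N z \<le> 1 + real_of_rat r"
    using z unfolding sparse_unit_iff by simp
qed

lemma ric_less_iff_rat:
  assumes "N > 0" "s > 0"
  shows "ric B I N s < \<delta> \<longleftrightarrow> (\<exists>r. of_rat r < \<delta> \<and> ric_rat_bound B I N s r)"
proof
  assume "ric B I N s < \<delta>"
  then obtain d where d: "d \<in> ric_bounds B I N s" "d < \<delta>"
    using cInf_lessD[OF ric_bounds_nonempty] unfolding ric_eq_Inf_ric_bounds by blast
  obtain r where r: "d < of_rat r" "of_rat r < \<delta>"
    using Rats_dense_in_real[OF d(2)] by (metis Rats_cases)
  then show "\<exists>r. of_rat r < \<delta> \<and> ric_rat_bound B I N s r"
    using ric_bounds_mono[OF d(1)] ric_rat_bound_if_mem by force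
next
  assume "\<exists>r. of_rat r < \<delta> \<and> ric_rat_bound B I N s r"
  then obtain r where r: "of_rat r < \<delta>" "ric_rat_bound B I N s r" by blast
  have "ric B I N s \<le> of_rat r" unfolding ric_eq_Inf_ric_bounds
    by (intro cInf_lower bdd_below_ric_bounds assms mem_ric_bounds_if_rat_bound r)
  then show "ric B I N s < \<delta>" using r by linarith
qed

lemma sets_ric_less_PiM:
  assumes "t \<times> {..<N} \<subseteq> X" "0 < N" "0 < s"
  shows "{f \<in> space (PiM X (\<lambda>_. borel)). ric (\<lambda>i j. f (i, j) / d) t N s < \<delta>} \<in> sets (PiM X (\<lambda>_. borel))"
proof -
  have [measurable]: "(\<lambda>f. sq_norm_image (\<lambda>i j. f (i, j) / d) t N v) \<in> borel_measurable (PiM X (\<lambda>_. borel))"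
    for v
    unfolding sq_norm_image_def using assms(1)
    by (intro borel_measurable_sum borel_measurable_power borel_measurable_times borel_measurable_divide
        measurable_component_singleton borel_measurable_const) auto
  have "{f \<in> space (PiM X (\<lambda>_. borel)). ric (\<lambda>i j. f (i, j) / d) t N s < \<delta>}
      = {f \<in> space (PiM X (\<lambda>_. borel)). \<exists>r. of_rat r < \<delta> \<and> ric_rat_bound (\<lambda>i j. f (i, j) / d) t N s r}"
    using ric_less_iff_rat[OF assms(2,3)] by blast
  also have "\<dots> \<in> sets (PiM X (\<lambda>_. borel))"
    unfolding ric_rat_bound_def by measurable
  finally show ?thesis .
qed

lemma ric_le_of_net:
  assumes "0 < s" "s \<le> N" "0 \<le> \<eta>"
    and net: "\<And>S k. S \<subseteq> {..<N} \<Longrightarrow> card S = s \<Longrightarrow> k \<in> net_index S s \<Longrightarrow>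
      \<bar>energy_dev a t N (net_point S s k)\<bar> \<le> \<eta> * norm2 N (net_point S s k)"
  shows "ric (\<lambda>i j. a i j / sqrt (real (card t))) t N s \<le> 3 * \<eta>"
proof (rule ric_le)
  show "N > 0" "s > 0" using assms by auto
  fix z assume z: "sparse_unit N s z"
  then have "card {j\<in>{..<N}. z j \<noteq> 0} \<le> s" unfolding sparse_unit_def by simp
  then obtain S where S: "{j\<in>{..<N}. z j \<noteq> 0} \<subseteq> S" "S \<subseteq> {..<N}" "card S = s"
    using exists_subset_between[of _ s "{..<N}"] assms(2) by auto
  have "z j = 0" if "j \<notin> S" for j
    using that S(1) z by (cases "j < N") (auto simp: sparse_unit_def)
  then have "\<bar>energy_dev a t N z\<bar> \<le> 3 * \<eta>"
    using S(2,3) assms(1,3) net z by (intro abs_energy_dev_le_of_net) (auto simp: sparse_unit_iff)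
  then show "\<bar>sq_norm_image (\<lambda>i j. a i j / sqrt (real (card t))) t N z - 1\<bar> \<le> 3 * \<eta>"
    using z by (simp add: sq_norm_image_over_sqrt_card sparse_unit_iff)
qed

section \<open>Conditioning on an independent random index\<close>

lemma (in prob_space) integral_finite_range:
  assumes T: "T \<in> measurable M (count_space UNIV)" "\<And>\<omega>. \<omega> \<in> space M \<Longrightarrow> T \<omega> \<in> U" and "finite U"
  shows "(\<integral>\<omega>. f (T \<omega>) \<partial>M) = (\<Sum>t\<in>U. f t * prob {\<omega>\<in>space M. T \<omega> = t})"
proof -
  have sets: "{\<omega>\<in>space M. T \<omega> = t} \<in> sets M" for t
    using T(1) by measurable
  have "(\<integral>\<omega>. f (T \<omega>) \<partial>M) = (\<integral>\<omega>. (\<Sum>t\<in>U. f t * indicator {\<omega>\<in>space M. T \<omega> = t} \<omega>) \<partial>M)"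
  proof (rule Bochner_Integration.integral_cong[OF refl])
    fix \<omega> assume "\<omega> \<in> space M"
    then have "(\<Sum>t\<in>U. f t * indicator {\<omega>\<in>space M. T \<omega> = t} \<omega>) = (\<Sum>t\<in>U. if t = T \<omega> then f t else 0)"
      by (intro sum.cong) (auto simp: indicator_def)
    also have "\<dots> = f (T \<omega>)" using T(2)[OF \<open>\<omega> \<in> space M\<close>] \<open>finite U\<close> by simp
    finally show "f (T \<omega>) = (\<Sum>t\<in>U. f t * indicator {\<omega>\<in>space M. T \<omega> = t} \<omega>)" by simp
  qed
  also have "\<dots> = (\<Sum>t\<in>U. f t * prob {\<omega>\<in>space M. T \<omega> = t})"
    using sets by (subst Bochner_Integration.integral_sum)
      (auto intro!: integrable_mult_right integrable_real_indicator simp: less_top[symmetric])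
  finally show ?thesis .
qed

lemma (in prob_space) prob_event_at_independent_index_ge:
  assumes "finite U"
    and T: "T \<in> measurable M (count_space UNIV)" "\<And>\<omega>. \<omega> \<in> space M \<Longrightarrow> T \<omega> \<in> U"
    and indep: "indep_set (sigma_sets (space M) {X -` B \<inter> space M | B. B \<in> sets N})
      (sigma_sets (space M) {T -` B \<inter> space M | B. B \<in> sets (count_space UNIV)})"
    and G: "\<And>t. t \<in> U \<Longrightarrow> G t \<in> sets N"
    and g: "\<And>t. t \<in> U \<Longrightarrow> g t \<le> prob (X -` G t \<inter> space M)"
  shows "(\<integral>\<omega>. g (T \<omega>) \<partial>M) \<le> prob {\<omega>\<in>space M. X \<omega> \<in> G (T \<omega>)}"
proof -
  define F where "F = (\<lambda>t. {\<omega>\<in>space M. T \<omega> = t})"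
  have X_ev: "X -` G t \<inter> space M \<in> sigma_sets (space M) {X -` B \<inter> space M | B. B \<in> sets N}" if "t \<in> U" for t
    using G[OF that] by blast
  have F_ev: "F t \<in> sigma_sets (space M) {T -` B \<inter> space M | B. B \<in> sets (count_space UNIV)}" for t
  proof -
    have "F t = T -` {t} \<inter> space M" by (auto simp: F_def)
    then show ?thesis by (auto intro: sigma_sets.Basic)
  qed
  have sets: "X -` G t \<inter> space M \<in> events" "F t \<in> events" if "t \<in> U" for t
    using indep_setD_ev1[OF indep] indep_setD_ev2[OF indep] X_ev[OF that] F_ev by auto
  have "(\<integral>\<omega>. g (T \<omega>) \<partial>M) = (\<Sum>t\<in>U. g t * prob (F t))"
    unfolding F_def by (rule integral_finite_range[OF T \<open>finite U\<close>])
  also have "\<dots> \<le> (\<Sum>t\<in>U. prob (X -` G t \<inter> space M) * prob (F t))"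
    by (intro sum_mono mult_right_mono g) auto
  also have "\<dots> = (\<Sum>t\<in>U. prob ((X -` G t \<inter> space M) \<inter> F t))"
    using indep_setD[OF indep X_ev F_ev] by simp
  also have "\<dots> = prob (\<Union>t\<in>U. (X -` G t \<inter> space M) \<inter> F t)"
    using sets \<open>finite U\<close>
    by (intro finite_measure_finite_Union[symmetric]) (auto simp: disjoint_family_on_def F_def)
  also have "(\<Union>t\<in>U. (X -` G t \<inter> space M) \<inter> F t) = {\<omega>\<in>space M. X \<omega> \<in> G (T \<omega>)}"
    using T(2) by (auto simp: F_def)
  finally show ?thesis .
qed

section \<open>Rows of a subGaussian matrix\<close>

text \<open>\<open>rip_const c\<close> is the constant \<open>C\<close> of the theorem. \<open>subg_const c\<close> bounds the even
  moments of a unit combination \<open>Y\<close> of a row: \<open>E Y\<^sup>2\<^sup>k \<le> 2 k! (subg_const c)\<^sup>k\<close>.\<close>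

definition subg_const :: "real \<Rightarrow> real" where
  "subg_const c = 4 * c * exp 1 + 1"

definition rip_const :: "real \<Rightarrow> real" where
  "rip_const c = 1 / (20000 * (subg_const c)\<^sup>2)"

lemma subg_const_ge_1: "c > 0 \<Longrightarrow> subg_const c \<ge> 1"
  unfolding subg_const_def by simp

lemma rip_const_pos: "c > 0 \<Longrightarrow> rip_const c > 0"
  using subg_const_ge_1[of c] unfolding rip_const_def by simp

lemma moment_coeff_le:
  fixes c lam :: real
  assumes "c > 0" "k \<ge> 1" "0 \<le> lam"
  shows "lam ^ k / fact k * (2 * fact (2*k) * (c / real k) ^ k * exp (real k)) \<le> 2 * (lam * subg_const c) ^ k"
proof -
  have "lam ^ k / fact k * (2 * fact (2*k) * (c / real k) ^ k * exp (real k))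
      \<le> lam ^ k / fact k * (2 * (4 ^ k * fact k * real k ^ k) * (c / real k) ^ k * exp (real k))"
    using fact_double_le[of k] assms by (intro mult_left_mono mult_right_mono) auto
  also have "\<dots> = 2 * (lam * (4 * c * exp 1)) ^ k"
    using assms by (simp add: field_simps power_mult_distrib power_divide exp_of_nat_mult[symmetric]
        mult.commute[of "real k"])
  also have "\<dots> \<le> 2 * (lam * subg_const c) ^ k"
    unfolding subg_const_def using assms by (intro mult_left_mono power_mono) auto
  finally show ?thesis .
qed

text \<open>The hypothesis \<open>small\<close> costs nothing (otherwise the bound on the probability is trivial)
  and forces \<open>\<delta>\<^sup>2 n / (20000 a\<^sup>2) > 7 s / 2\<close>, which absorbs the factors \<open>N choose s\<close> and \<open>exp (201 s) 4\<^sup>s\<close>.\<close>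

lemma net_union_bound_le:
  fixes a \<delta> n :: real
  assumes a: "a \<ge> 1" and s: "0 < s" "s \<le> N" and "\<delta> > 0" "n \<ge> 0"
    and small: "2 * (exp 1 * real N / real s) ^ s * exp (7 * real s / 2) * exp (- (1 / (20000 * a\<^sup>2)) * \<delta>\<^sup>2 * n) < 1"
  shows "real (N choose s) * (exp (201 * real s) * 4 ^ s) * (2 * exp (- ((\<delta>/4)\<^sup>2 * n / (16 * a\<^sup>2))))
    \<le> 2 * (exp 1 * real N / real s) ^ s * exp (7 * real s / 2) * exp (- (1 / (20000 * a\<^sup>2)) * \<delta>\<^sup>2 * n)"
proof -
  define B where "B = (exp 1 * real N / real s) ^ s"
  define X where "X = 1 / (20000 * a\<^sup>2) * \<delta>\<^sup>2 * n"
  have "X \<ge> 0" using \<open>n \<ge> 0\<close> by (simp add: X_def)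
  have "B \<ge> 1" unfolding B_def using s by (rule one_le_exp_ratio_pow)
  have ex: "exp (7 * real s / 2) * exp (- (1 / (20000 * a\<^sup>2)) * \<delta>\<^sup>2 * n) = exp (7 * real s / 2 - X)"
    unfolding exp_add[symmetric] X_def by simp
  have "exp (7 * real s / 2 - X) < 1"
  proof -
    have "1 * exp (7 * real s / 2 - X) \<le> (2 * B) * exp (7 * real s / 2 - X)"
      using \<open>B \<ge> 1\<close> by (intro mult_right_mono) auto
    also have "\<dots> < 1" using small unfolding B_def[symmetric] ex[symmetric] by (simp add: ac_simps)
    finally show ?thesis by simp
  qed
  then have "7 * real s / 2 < X" by simp
  moreover have "(\<delta>/4)\<^sup>2 * n / (16 * a\<^sup>2) = (625/8) * X"
    unfolding X_def using a by (simp add: field_simps power2_eq_square)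
  ultimately have key: "203 * real s - (\<delta>/4)\<^sup>2 * n / (16 * a\<^sup>2) \<le> 7 * real s / 2 - X"
    using \<open>X \<ge> 0\<close> by linarith
  have "(4::real) ^ s \<le> exp 2 ^ s"
    using exp_ge_add_one_self[of 1] mult_mono[of 2 "exp 1" 2 "exp (1::real)"]
    by (intro power_mono) (simp_all flip: exp_add)
  then have four: "(4::real) ^ s \<le> exp (2 * real s)" by (simp add: exp_of_nat_mult[symmetric] mult.commute)
  have "real (N choose s) * (exp (201 * real s) * 4 ^ s) * (2 * exp (- ((\<delta>/4)\<^sup>2 * n / (16 * a\<^sup>2))))
      \<le> B * (exp (201 * real s) * exp (2 * real s)) * (2 * exp (- ((\<delta>/4)\<^sup>2 * n / (16 * a\<^sup>2))))"
    unfolding B_def using binomial_le_exp_pow[OF s] four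
    by (intro mult_right_mono mult_mono mult_left_mono) auto
  also have "\<dots> = 2 * B * exp (203 * real s - (\<delta>/4)\<^sup>2 * n / (16 * a\<^sup>2))"
    by (simp add: exp_diff exp_minus field_simps flip: exp_add)
  also have "\<dots> \<le> 2 * B * exp (7 * real s / 2 - X)"
    using \<open>B \<ge> 1\<close> key by (intro mult_left_mono) auto
  finally show ?thesis unfolding B_def[symmetric] ex[symmetric] by (simp add: ac_simps)
qed

locale subgaussian_matrix = prob_space +
  fixes A :: "'a \<Rightarrow> nat \<Rightarrow> nat \<Rightarrow> real" and m N :: nat and c :: real
  assumes indep_entries: "indep_vars (\<lambda>_. borel) (\<lambda>(i,j) \<omega>. A \<omega> i j) ({..<m} \<times> {..<N})"
    and integrable_entry: "\<And>i j. i < m \<Longrightarrow> j < N \<Longrightarrow> integrable M (\<lambda>\<omega>. A \<omega> i j)"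
    and integrable_entry_sq: "\<And>i j. i < m \<Longrightarrow> j < N \<Longrightarrow> integrable M (\<lambda>\<omega>. (A \<omega> i j)\<^sup>2)"
    and expectation_entry: "\<And>i j. i < m \<Longrightarrow> j < N \<Longrightarrow> (\<integral>\<omega>. A \<omega> i j \<partial>M) = 0"
    and expectation_entry_sq: "\<And>i j. i < m \<Longrightarrow> j < N \<Longrightarrow> (\<integral>\<omega>. (A \<omega> i j)\<^sup>2 \<partial>M) = 1"
    and mgf_entry: "\<And>i j \<theta>. i < m \<Longrightarrow> j < N \<Longrightarrow>
      (\<integral>\<^sup>+\<omega>. ennreal (exp (\<theta> * A \<omega> i j)) \<partial>M) \<le> ennreal (exp (c * \<theta>\<^sup>2))"
    and c_pos: "c > 0"
begin

abbreviation "a \<equiv> subg_const c"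

lemma a_ge_1: "a \<ge> 1"
  using subg_const_ge_1[OF c_pos] .

lemma indep_entries_fst_snd: "indep_vars (\<lambda>_. borel) (\<lambda>p \<omega>. A \<omega> (fst p) (snd p)) ({..<m} \<times> {..<N})"
  using indep_entries by (simp add: case_prod_beta')

lemma measurable_entry [measurable]: "i < m \<Longrightarrow> j < N \<Longrightarrow> (\<lambda>\<omega>. A \<omega> i j) \<in> borel_measurable M"
  using indep_entries_fst_snd unfolding indep_vars_def by force

lemma measurable_row_prod [measurable]: "i < m \<Longrightarrow> (\<lambda>\<omega>. row_prod (A \<omega>) N i u) \<in> borel_measurable M"
  unfolding row_prod_def by (intro borel_measurable_sum borel_measurable_times measurable_entry) auto

lemma measurable_energy_dev [measurable]:
  "t \<subseteq> {..<m} \<Longrightarrow> (\<lambda>\<omega>. energy_dev (A \<omega>) t N x) \<in> borel_measurable M"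
  unfolding energy_dev_def
  by (intro borel_measurable_diff borel_measurable_divide borel_measurable_sum borel_measurable_power
      measurable_row_prod borel_measurable_const) auto

lemma mgf_row_prod_le:
  assumes "i < m"
  shows "(\<integral>\<^sup>+\<omega>. ennreal (exp (\<theta> * row_prod (A \<omega>) N i u)) \<partial>M) \<le> ennreal (exp (c * \<theta>\<^sup>2 * norm2 N u))"
proof -
  let ?I = "{i} \<times> {..<N}"
  let ?X = "\<lambda>p \<omega>. ennreal (exp (\<theta> * u (snd p) * A \<omega> (fst p) (snd p)))"
  have row: "?I = Pair i ` {..<N}" by auto
  have sum_row: "(\<Sum>p\<in>?I. f p) = (\<Sum>j<N. f (i, j))" for f :: "nat \<times> nat \<Rightarrow> real"
    unfolding row by (subst sum.reindex) (auto simp: inj_on_def)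
  have "indep_vars (\<lambda>_. borel) ?X ?I"
    using indep_vars_compose2[OF indep_vars_subset[OF indep_entries_fst_snd, of ?I],
        of "\<lambda>p x. ennreal (exp (\<theta> * u (snd p) * x))" "\<lambda>_. borel"] assms by auto
  then have "(\<integral>\<^sup>+\<omega>. (\<Prod>p\<in>?I. ?X p \<omega>) \<partial>M) = (\<Prod>p\<in>?I. \<integral>\<^sup>+\<omega>. ?X p \<omega> \<partial>M)"
    by (intro indep_vars_nn_integral) auto
  moreover have "ennreal (exp (\<theta> * row_prod (A \<omega>) N i u)) = (\<Prod>p\<in>?I. ?X p \<omega>)" for \<omega>
  proof -
    have "\<theta> * row_prod (A \<omega>) N i u = (\<Sum>p\<in>?I. \<theta> * u (snd p) * A \<omega> (fst p) (snd p))"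
      unfolding row_prod_def sum_row by (simp add: sum_distrib_left mult_ac)
    then show ?thesis by (simp add: exp_sum prod_ennreal)
  qed
  moreover have "(\<Prod>p\<in>?I. \<integral>\<^sup>+\<omega>. ?X p \<omega> \<partial>M) \<le> (\<Prod>p\<in>?I. ennreal (exp (c * (\<theta> * u (snd p))\<^sup>2)))"
    using assms by (intro prod_mono_ennreal) (auto intro: mgf_entry)
  moreover have "(\<Prod>p\<in>?I. ennreal (exp (c * (\<theta> * u (snd p))\<^sup>2))) = ennreal (exp (c * \<theta>\<^sup>2 * norm2 N u))"
  proof -
    have "(\<Sum>p\<in>?I. c * (\<theta> * u (snd p))\<^sup>2) = c * \<theta>\<^sup>2 * norm2 N u"
      unfolding sum_row norm2_def by (simp add: sum_distrib_left power_mult_distrib mult_ac)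
    moreover have "(\<Prod>p\<in>?I. ennreal (exp (c * (\<theta> * u (snd p))\<^sup>2)))
        = ennreal (exp (\<Sum>p\<in>?I. c * (\<theta> * u (snd p))\<^sup>2))"
      by (simp add: prod_ennreal exp_sum)
    ultimately show ?thesis by simp
  qed
  ultimately show ?thesis by simp
qed

lemma expectation_entry_prod:
  assumes "i < m" "j < N" "k < N"
  shows "integrable M (\<lambda>\<omega>. A \<omega> i j * A \<omega> i k)"
    and "(\<integral>\<omega>. A \<omega> i j * A \<omega> i k \<partial>M) = (if j = k then 1 else 0)"
proof -
  have "integrable M (\<lambda>\<omega>. A \<omega> i j * A \<omega> i k) \<and> (\<integral>\<omega>. A \<omega> i j * A \<omega> i k \<partial>M) = (if j = k then 1 else 0)"
  proof (cases "j = k")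
    case True
    then show ?thesis
      using integrable_entry_sq expectation_entry_sq assms by (simp add: power2_eq_square)
  next
    case False
    let ?I = "{(i,j), (i,k)}"
    have ind: "indep_vars (\<lambda>_. borel) (\<lambda>p \<omega>. A \<omega> (fst p) (snd p)) ?I"
      by (rule indep_vars_subset[OF indep_entries_fst_snd]) (use assms in auto)
    have int: "\<And>p. p \<in> ?I \<Longrightarrow> integrable M (\<lambda>\<omega>. A \<omega> (fst p) (snd p))"
      using integrable_entry assms by auto
    have "integrable M (\<lambda>\<omega>. \<Prod>p\<in>?I. A \<omega> (fst p) (snd p))"
      by (rule indep_vars_integrable[OF _ ind int]) auto
    moreover have "(\<integral>\<omega>. (\<Prod>p\<in>?I. A \<omega> (fst p) (snd p)) \<partial>M) = (\<Prod>p\<in>?I. \<integral>\<omega>. A \<omega> (fst p) (snd p) \<partial>M)"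
      by (rule indep_vars_lebesgue_integral[OF _ ind int]) auto
    ultimately show ?thesis using False expectation_entry assms by simp
  qed
  then show "integrable M (\<lambda>\<omega>. A \<omega> i j * A \<omega> i k)"
    and "(\<integral>\<omega>. A \<omega> i j * A \<omega> i k \<partial>M) = (if j = k then 1 else 0)" by auto
qed

lemma row_prod_sq_eq: "(row_prod (A \<omega>) N i u)\<^sup>2 = (\<Sum>j<N. \<Sum>k<N. (A \<omega> i j * A \<omega> i k) * (u j * u k))"
  unfolding row_prod_def power2_eq_square sum_product by (simp add: mult_ac)

lemma expectation_row_prod_sq:
  assumes "i < m"
  shows "integrable M (\<lambda>\<omega>. (row_prod (A \<omega>) N i u)\<^sup>2)"
    and "(\<integral>\<omega>. (row_prod (A \<omega>) N i u)\<^sup>2 \<partial>M) = norm2 N u"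
proof -
  have int: "integrable M (\<lambda>\<omega>. (A \<omega> i j * A \<omega> i k) * (u j * u k))" if "j < N" "k < N" for j k
    using expectation_entry_prod(1)[OF assms that] by simp
  show "integrable M (\<lambda>\<omega>. (row_prod (A \<omega>) N i u)\<^sup>2)"
    unfolding row_prod_sq_eq by (intro Bochner_Integration.integrable_sum int) auto
  have "(\<integral>\<omega>. (row_prod (A \<omega>) N i u)\<^sup>2 \<partial>M)
      = (\<Sum>j<N. \<Sum>k<N. (\<integral>\<omega>. A \<omega> i j * A \<omega> i k \<partial>M) * (u j * u k))"
  proof -
    have "(\<integral>\<omega>. (\<Sum>j<N. \<Sum>k<N. (A \<omega> i j * A \<omega> i k) * (u j * u k)) \<partial>M)
        = (\<Sum>j<N. \<integral>\<omega>. (\<Sum>k<N. (A \<omega> i j * A \<omega> i k) * (u j * u k)) \<partial>M)"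
      by (intro Bochner_Integration.integral_sum Bochner_Integration.integrable_sum int) auto
    also have "\<dots> = (\<Sum>j<N. \<Sum>k<N. \<integral>\<omega>. (A \<omega> i j * A \<omega> i k) * (u j * u k) \<partial>M)"
      by (intro sum.cong refl Bochner_Integration.integral_sum int) auto
    finally show ?thesis unfolding row_prod_sq_eq by simp
  qed
  also have "\<dots> = (\<Sum>j<N. \<Sum>k<N. if k = j then u j * u k else 0)"
    using expectation_entry_prod(2)[OF assms] by (intro sum.cong) auto
  also have "\<dots> = norm2 N u" unfolding norm2_def by (simp add: power2_eq_square)
  finally show "(\<integral>\<omega>. (row_prod (A \<omega>) N i u)\<^sup>2 \<partial>M) = norm2 N u" .
qed

lemma nn_integral_row_prod_sq:
  assumes "i < m" "norm2 N u = 1"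
  shows "(\<integral>\<^sup>+\<omega>. ennreal ((row_prod (A \<omega>) N i u)\<^sup>2) \<partial>M) = 1"
  using expectation_row_prod_sq[OF assms(1)] assms(2) by (subst nn_integral_eq_integral) auto

lemma even_moment_row_prod_le:
  assumes "i < m" "norm2 N u = 1" "k \<ge> 1"
  shows "(\<integral>\<^sup>+\<omega>. ennreal ((row_prod (A \<omega>) N i u) ^ (2*k)) \<partial>M)
    \<le> ennreal (2 * fact (2*k) * (c / real k) ^ k * exp (real k))"
proof -
  let ?Y = "\<lambda>\<omega>. row_prod (A \<omega>) N i u"
  define \<theta> where "\<theta> = sqrt (real k / c)"
  have \<theta>: "\<theta> > 0" "\<theta>\<^sup>2 = real k / c" using assms(3) c_pos by (auto simp: \<theta>_def)
  define F where "F = fact (2*k) / \<theta> ^ (2*k)"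
  have "F \<ge> 0" using \<theta> by (simp add: F_def)
  have "(\<integral>\<^sup>+\<omega>. ennreal (?Y \<omega> ^ (2*k)) \<partial>M)
     \<le> (\<integral>\<^sup>+\<omega>. ennreal F * (ennreal (exp (\<theta> * ?Y \<omega>)) + ennreal (exp ((-\<theta>) * ?Y \<omega>))) \<partial>M)"
    using even_power_le_exp_sum[OF \<theta>(1)] \<open>F \<ge> 0\<close>
    by (intro nn_integral_mono) (simp add: F_def ennreal_mult[symmetric] ennreal_plus[symmetric] del: ennreal_plus)
  also have "\<dots> = ennreal F * ((\<integral>\<^sup>+\<omega>. ennreal (exp (\<theta> * ?Y \<omega>)) \<partial>M) + (\<integral>\<^sup>+\<omega>. ennreal (exp ((-\<theta>) * ?Y \<omega>)) \<partial>M))"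
    using assms(1) by (simp add: nn_integral_cmult nn_integral_add)
  also have "\<dots> \<le> ennreal F * (ennreal (exp (c * \<theta>\<^sup>2 * norm2 N u)) + ennreal (exp (c * (-\<theta>)\<^sup>2 * norm2 N u)))"
    by (intro mult_left_mono add_mono mgf_row_prod_le assms(1)) auto
  also have "\<dots> = ennreal (F * (2 * exp (real k)))"
    using assms(2) \<theta> c_pos \<open>F \<ge> 0\<close> by (simp add: ennreal_mult ennreal_plus[symmetric] del: ennreal_plus)
  also have "F * (2 * exp (real k)) = 2 * fact (2*k) * (c / real k) ^ k * exp (real k)"
  proof -
    have "\<theta> ^ (2*k) = (real k / c) ^ k" by (simp add: power_mult \<theta>(2)[symmetric])
    then show ?thesis unfolding F_def using assms(3) c_pos by (simp only:) (simp add: field_simps power_divide)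
  qed
  finally show ?thesis .
qed

lemma exp_series_term_row_prod_le:
  assumes i: "i < m" and u: "norm2 N u = 1" and lam: "0 \<le> lam"
  shows "(\<integral>\<^sup>+\<omega>. ennreal ((lam * (row_prod (A \<omega>) N i u)\<^sup>2) ^ n / fact n) \<partial>M)
    \<le> ennreal (if n = 0 then 1 else if n = 1 then lam else 2 * (lam * a) ^ n)"
proof -
  let ?Y = "\<lambda>\<omega>. row_prod (A \<omega>) N i u"
  have series_term: "(\<integral>\<^sup>+\<omega>. ennreal ((lam * (?Y \<omega>)\<^sup>2) ^ n / fact n) \<partial>M)
      = ennreal (lam ^ n / fact n) * (\<integral>\<^sup>+\<omega>. ennreal (?Y \<omega> ^ (2*n)) \<partial>M)"
    using i lam by (subst nn_integral_cmult[symmetric])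
      (auto intro!: nn_integral_cong simp: ennreal_mult[symmetric] power_mult_distrib power_mult)
  consider "n = 0" | "n = 1" | "n \<ge> 2" by linarith
  then show ?thesis
  proof cases
    case 3
    have "(\<integral>\<^sup>+\<omega>. ennreal ((lam * (?Y \<omega>)\<^sup>2) ^ n / fact n) \<partial>M)
        \<le> ennreal (lam ^ n / fact n) * ennreal (2 * fact (2*n) * (c / real n) ^ n * exp (real n))"
      unfolding series_term using 3 by (intro mult_left_mono even_moment_row_prod_le i u) auto
    also have "\<dots> = ennreal (lam ^ n / fact n * (2 * fact (2*n) * (c / real n) ^ n * exp (real n)))"
      by (rule ennreal_mult[symmetric]) (use lam c_pos in auto)
    also have "\<dots> \<le> ennreal (2 * (lam * a) ^ n)"
      using 3 lam c_pos by (intro ennreal_leI moment_coeff_le) auto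
    finally show ?thesis using 3 by simp
  qed (unfold series_term, simp_all add: emeasure_space_1 nn_integral_row_prod_sq[OF i u])
qed

lemma mgf_sq_row_prod_le_nonneg:
  assumes i: "i < m" and u: "norm2 N u = 1" and lam: "0 \<le> lam" "lam * a \<le> 1/2"
  shows "(\<integral>\<^sup>+\<omega>. ennreal (exp (lam * (row_prod (A \<omega>) N i u)\<^sup>2)) \<partial>M) \<le> ennreal (1 + lam + 4 * a\<^sup>2 * lam\<^sup>2)"
proof -
  let ?Y = "\<lambda>\<omega>. row_prod (A \<omega>) N i u"
  define x where "x = lam * a"
  have x: "0 \<le> x" "x \<le> 1/2" using lam a_ge_1 by (auto simp: x_def)
  define g where "g = (\<lambda>n. if n = 0 then 1 else if n = 1 then lam else 2 * x ^ n)"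
  have "g = (\<lambda>n. 2 * x ^ n - (if n = 0 then 1 else 0) - (if n = 1 then 2 * x - lam else 0))"
    by (auto simp: g_def)
  moreover have "(\<lambda>n. 2 * x ^ n - (if n = 0 then 1 else 0) - (if n = 1 then 2 * x - lam else 0))
      sums (2 * (1 / (1 - x)) - 1 - (2 * x - lam))"
    using x sums_single[of 0 "\<lambda>_. 1::real"] sums_single[of 1 "\<lambda>_. 2 * x - lam"]
    by (intro sums_diff sums_mult geometric_sums) auto
  ultimately have g_sums: "g sums (2 / (1 - x) - 1 - (2 * x - lam))" by simp
  have "(\<integral>\<^sup>+\<omega>. ennreal (exp (lam * (?Y \<omega>)\<^sup>2)) \<partial>M)
      = (\<Sum>n. \<integral>\<^sup>+\<omega>. ennreal ((lam * (?Y \<omega>)\<^sup>2) ^ n / fact n) \<partial>M)"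
    using i lam by (simp add: ennreal_exp_series nn_integral_suminf)
  also have "\<dots> \<le> (\<Sum>n. ennreal (g n))"
    using exp_series_term_row_prod_le[OF i u lam(1)] unfolding g_def x_def
    by (intro suminf_le summableI) auto
  also have "\<dots> = ennreal (2 / (1 - x) - 1 - (2 * x - lam))"
    using g_sums x lam by (subst suminf_ennreal2) (auto simp: sums_iff g_def)
  also have "\<dots> \<le> ennreal (1 + lam + 4 * a\<^sup>2 * lam\<^sup>2)"
  proof (rule ennreal_leI)
    have "(2 * x) * x\<^sup>2 \<le> 1 * x\<^sup>2" using x by (intro mult_right_mono) auto
    then have "2 * x\<^sup>2 \<le> 4 * x\<^sup>2 * (1 - x)" by (simp add: algebra_simps)
    then have "2 / (1 - x) - 1 - 2 * x \<le> 1 + 4 * x\<^sup>2"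
      using x by (simp add: field_simps power2_eq_square)
    then show "2 / (1 - x) - 1 - (2 * x - lam) \<le> 1 + lam + 4 * a\<^sup>2 * lam\<^sup>2"
      by (simp add: x_def power_mult_distrib mult.commute)
  qed
  finally show ?thesis .
qed

lemma mgf_sq_row_prod_le_nonpos:
  assumes i: "i < m" and u: "norm2 N u = 1" and lam: "0 \<le> lam" "lam * a \<le> 1/2"
  shows "(\<integral>\<^sup>+\<omega>. ennreal (exp (- lam * (row_prod (A \<omega>) N i u)\<^sup>2)) \<partial>M) \<le> ennreal (1 - lam + 4 * a\<^sup>2 * lam\<^sup>2)"
proof -
  let ?Y = "\<lambda>\<omega>. row_prod (A \<omega>) N i u"
  define X where "X = (\<integral>\<^sup>+\<omega>. ennreal (exp (- lam * (?Y \<omega>)\<^sup>2)) \<partial>M)"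
  have "X + ennreal (2 * lam) = (\<integral>\<^sup>+\<omega>. ennreal (exp (- lam * (?Y \<omega>)\<^sup>2)) + ennreal (2 * lam) * ennreal ((?Y \<omega>)\<^sup>2) \<partial>M)"
    unfolding X_def using i u by (simp add: nn_integral_add nn_integral_cmult nn_integral_row_prod_sq)
  also have "\<dots> \<le> (\<integral>\<^sup>+\<omega>. ennreal (exp (lam * (?Y \<omega>)\<^sup>2)) \<partial>M)"
    using lam exp_minus_add_le_exp[of "lam * (?Y _)\<^sup>2"]
    by (intro nn_integral_mono) (simp add: ennreal_mult[symmetric] ennreal_plus[symmetric] mult.assoc del: ennreal_plus)
  also have "\<dots> \<le> ennreal (1 + lam + 4 * a\<^sup>2 * lam\<^sup>2)" by (rule mgf_sq_row_prod_le_nonneg[OF i u lam])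
  finally have le: "X + ennreal (2 * lam) \<le> ennreal (1 + lam + 4 * a\<^sup>2 * lam\<^sup>2)" .
  have "X \<le> (\<integral>\<^sup>+\<omega>. 1 \<partial>M)" unfolding X_def
    using lam by (intro nn_integral_mono) (auto simp: mult_nonneg_nonneg)
  then obtain x where x: "X = ennreal x" "0 \<le> x"
    by (cases X) (auto simp: emeasure_space_1 top_unique)
  then have "x + 2 * lam \<le> 1 + lam + 4 * a\<^sup>2 * lam\<^sup>2"
    using le lam by (simp add: ennreal_plus[symmetric] del: ennreal_plus)
  then show ?thesis using x unfolding X_def by (simp add: ennreal_leI)
qed

lemma mgf_sq_row_prod_le:
  assumes "i < m" "norm2 N u = 1" "\<bar>\<theta>\<bar> * a \<le> 1/2"
  shows "(\<integral>\<^sup>+\<omega>. ennreal (exp (\<theta> * (row_prod (A \<omega>) N i u)\<^sup>2)) \<partial>M) \<le> ennreal (1 + \<theta> + 4 * a\<^sup>2 * \<theta>\<^sup>2)"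
proof (cases "\<theta> \<ge> 0")
  case True
  then show ?thesis using assms by (intro mgf_sq_row_prod_le_nonneg) auto
next
  case False
  then show ?thesis using assms mgf_sq_row_prod_le_nonpos[of i u "-\<theta>"] by simp
qed

lemma indep_row_funs:
  assumes "t \<subseteq> {..<m}" and F: "F \<in> borel_measurable (borel :: real measure)"
  shows "indep_vars (\<lambda>_. borel) (\<lambda>i \<omega>. F (row_prod (A \<omega>) N i u)) t"
proof -
  define R where "R = (\<lambda>i::nat. {i} \<times> {..<N})"
  have "indep_vars (\<lambda>i. PiM (R i) (\<lambda>_. borel)) (\<lambda>i \<omega>. restrict (\<lambda>p. A \<omega> (fst p) (snd p)) (R i)) t"
    using assms(1) by (intro indep_vars_restrict[OF indep_entries_fst_snd]) (auto simp: R_def disjoint_family_on_def)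
  moreover have "(\<lambda>f. F (\<Sum>j<N. f (i, j) * u j)) \<in> borel_measurable (PiM (R i) (\<lambda>_. borel))" for i
    using F by (intro measurable_compose[OF _ F] borel_measurable_sum borel_measurable_times
        measurable_component_singleton) (auto simp: R_def)
  ultimately have "indep_vars (\<lambda>_. borel)
      (\<lambda>i \<omega>. F (\<Sum>j<N. restrict (\<lambda>p. A \<omega> (fst p) (snd p)) (R i) (i, j) * u j)) t"
    by (rule indep_vars_compose2)
  then show ?thesis by (simp add: R_def row_prod_def mult.commute)
qed

lemma nn_integral_exp_energy_le:
  assumes t: "t \<subseteq> {..<m}" and u: "norm2 N u = 1" and \<theta>: "\<bar>\<theta>\<bar> * a \<le> 1/2"
  shows "(\<integral>\<^sup>+\<omega>. ennreal (exp (\<theta> * (\<Sum>i\<in>t. (row_prod (A \<omega>) N i u)\<^sup>2))) \<partial>M)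
    \<le> ennreal (exp (real (card t) * (\<theta> + 4 * a\<^sup>2 * \<theta>\<^sup>2)))"
proof -
  have fin: "finite t" using t finite_subset by blast
  have "\<bar>\<theta>\<bar> \<le> 1/2" using \<theta> a_ge_1 by (smt (verit) mult_le_cancel_left1)
  then have nonneg: "0 \<le> 1 + \<theta> + 4 * a\<^sup>2 * \<theta>\<^sup>2" by (simp add: abs_le_iff add_nonneg_nonneg)
  have "(\<integral>\<^sup>+\<omega>. ennreal (exp (\<theta> * (\<Sum>i\<in>t. (row_prod (A \<omega>) N i u)\<^sup>2))) \<partial>M)
      = (\<integral>\<^sup>+\<omega>. (\<Prod>i\<in>t. ennreal (exp (\<theta> * (row_prod (A \<omega>) N i u)\<^sup>2))) \<partial>M)"
    by (simp add: sum_distrib_left exp_sum[OF fin] prod_ennreal)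
  also have "\<dots> = (\<Prod>i\<in>t. \<integral>\<^sup>+\<omega>. ennreal (exp (\<theta> * (row_prod (A \<omega>) N i u)\<^sup>2)) \<partial>M)"
    by (intro indep_vars_nn_integral fin indep_row_funs[OF t]) auto
  also have "\<dots> \<le> (\<Prod>i\<in>t. ennreal (1 + \<theta> + 4 * a\<^sup>2 * \<theta>\<^sup>2))"
    using t by (intro prod_mono_ennreal mgf_sq_row_prod_le u \<theta>) auto
  also have "\<dots> = ennreal ((1 + \<theta> + 4 * a\<^sup>2 * \<theta>\<^sup>2) ^ card t)"
    using nonneg by (simp add: ennreal_power del: ennreal_plus)
  also have "\<dots> \<le> ennreal (exp (\<theta> + 4 * a\<^sup>2 * \<theta>\<^sup>2) ^ card t)"
    using nonneg exp_ge_add_one_self[of "\<theta> + 4 * a\<^sup>2 * \<theta>\<^sup>2"]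
    by (intro ennreal_leI power_mono) (auto simp: add.assoc)
  also have "exp (\<theta> + 4 * a\<^sup>2 * \<theta>\<^sup>2) ^ card t = exp (real (card t) * (\<theta> + 4 * a\<^sup>2 * \<theta>\<^sup>2))"
    by (simp add: exp_of_nat_mult[symmetric])
  finally show ?thesis .
qed

lemma prob_energy_ge_le:
  assumes t: "t \<subseteq> {..<m}" and u: "norm2 N u = 1" and \<theta>: "\<bar>\<theta>\<bar> * a \<le> 1/2"
  shows "prob {\<omega>\<in>space M. b \<le> \<theta> * (\<Sum>i\<in>t. (row_prod (A \<omega>) N i u)\<^sup>2)}
    \<le> exp (real (card t) * (\<theta> + 4 * a\<^sup>2 * \<theta>\<^sup>2) - b)"
proof -
  let ?S = "\<lambda>\<omega>. \<theta> * (\<Sum>i\<in>t. (row_prod (A \<omega>) N i u)\<^sup>2)"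
  have [measurable]: "?S \<in> borel_measurable M"
    using t by (intro borel_measurable_sum borel_measurable_power borel_measurable_times
        borel_measurable_const measurable_row_prod) auto
  have "emeasure M {\<omega>\<in>space M. b \<le> ?S \<omega>}
      \<le> ennreal (exp (- 1 * b)) * (\<integral>\<^sup>+\<omega>. ennreal (exp (1 * ?S \<omega>)) * indicator (space M) \<omega> \<partial>M)"
    by (rule Chernoff_ineq_nn_integral_ge) auto
  also have "(\<integral>\<^sup>+\<omega>. ennreal (exp (1 * ?S \<omega>)) * indicator (space M) \<omega> \<partial>M) = (\<integral>\<^sup>+\<omega>. ennreal (exp (?S \<omega>)) \<partial>M)"
    by (intro nn_integral_cong) simp
  also have "ennreal (exp (- 1 * b)) * \<dots> \<le> ennreal (exp (- b)) * ennreal (exp (real (card t) * (\<theta> + 4 * a\<^sup>2 * \<theta>\<^sup>2)))"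
    by (simp add: mult_left_mono nn_integral_exp_energy_le[OF t u \<theta>])
  also have "\<dots> = ennreal (exp (real (card t) * (\<theta> + 4 * a\<^sup>2 * \<theta>\<^sup>2) - b))"
    by (simp add: exp_diff exp_minus field_simps flip: ennreal_mult)
  finally show ?thesis by (simp add: emeasure_eq_measure)
qed

lemma prob_abs_energy_dev_gt_le_unit:
  assumes t: "t \<subseteq> {..<m}" "t \<noteq> {}" and u: "norm2 N u = 1" and \<eta>: "0 < \<eta>" "\<eta> \<le> 1"
  shows "prob {\<omega>\<in>space M. \<eta> < \<bar>energy_dev (A \<omega>) t N u\<bar>} \<le> 2 * exp (- (\<eta>\<^sup>2 * real (card t) / (16 * a\<^sup>2)))"
proof -
  define n where "n = real (card t)"
  have "n > 0" using t finite_subset[OF t(1)] by (simp add: n_def card_gt_0_iff)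
  define lam where "lam = \<eta> / (8 * a\<^sup>2)"
  have "lam > 0" using \<eta> a_ge_1 by (simp add: lam_def)
  have "lam * a \<le> 1/2"
    using \<eta> a_ge_1 by (simp add: lam_def power2_eq_square field_simps)
  then have lam: "\<bar>lam\<bar> * a \<le> 1/2" "\<bar>- lam\<bar> * a \<le> 1/2" using \<open>lam > 0\<close> by auto
  let ?S = "\<lambda>\<omega>. \<Sum>i\<in>t. (row_prod (A \<omega>) N i u)\<^sup>2"
  have [measurable]: "?S \<in> borel_measurable M"
    using t by (intro borel_measurable_sum borel_measurable_power borel_measurable_times
        borel_measurable_const measurable_row_prod) auto
  have "{\<omega>\<in>space M. \<eta> < \<bar>energy_dev (A \<omega>) t N u\<bar>}
      \<subseteq> {\<omega>\<in>space M. lam * (n * (1 + \<eta>)) \<le> lam * ?S \<omega>} \<union> {\<omega>\<in>space M. - lam * (n * (1 - \<eta>)) \<le> - lam * ?S \<omega>}"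
  proof safe
    fix \<omega> assume "\<eta> < \<bar>energy_dev (A \<omega>) t N u\<bar>" "\<not> - lam * (n * (1 - \<eta>)) \<le> - lam * ?S \<omega>"
    then have "\<eta> < \<bar>?S \<omega> / n - 1\<bar>" "\<not> ?S \<omega> \<le> n * (1 - \<eta>)"
      using u \<open>lam > 0\<close> by (auto simp: energy_dev_def n_def)
    then have "n * (1 + \<eta>) \<le> ?S \<omega>" using \<open>n > 0\<close> by (auto simp: field_simps abs_if split: if_splits)
    then show "lam * (n * (1 + \<eta>)) \<le> lam * ?S \<omega>" using \<open>lam > 0\<close> by simp
  qed
  then have "prob {\<omega>\<in>space M. \<eta> < \<bar>energy_dev (A \<omega>) t N u\<bar>}
      \<le> prob {\<omega>\<in>space M. lam * (n * (1 + \<eta>)) \<le> lam * ?S \<omega>} + prob {\<omega>\<in>space M. - lam * (n * (1 - \<eta>)) \<le> - lam * ?S \<omega>}"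
    by (intro order.trans[OF finite_measure_mono measure_Un_le]) auto
  also have "\<dots> \<le> exp (n * (lam + 4 * a\<^sup>2 * lam\<^sup>2) - lam * (n * (1 + \<eta>)))
      + exp (n * (- lam + 4 * a\<^sup>2 * (- lam)\<^sup>2) - (- lam * (n * (1 - \<eta>))))"
    unfolding n_def by (intro add_mono prob_energy_ge_le t u lam)
  also have "\<dots> = 2 * exp (- (\<eta>\<^sup>2 * n / (16 * a\<^sup>2)))"
    using a_ge_1 by (simp add: lam_def field_simps power2_eq_square)
  finally show ?thesis by (simp add: n_def)
qed

lemma prob_abs_energy_dev_gt_le:
  assumes "t \<subseteq> {..<m}" "t \<noteq> {}" "0 < \<eta>" "\<eta> \<le> 1"
  shows "prob {\<omega>\<in>space M. \<eta> * norm2 N x < \<bar>energy_dev (A \<omega>) t N x\<bar>}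
    \<le> 2 * exp (- (\<eta>\<^sup>2 * real (card t) / (16 * a\<^sup>2)))"
proof (cases "norm2 N x = 0")
  case True
  then have "{\<omega>\<in>space M. \<eta> * norm2 N x < \<bar>energy_dev (A \<omega>) t N x\<bar>} = {}"
    by (subst energy_dev_normalize) simp
  then show ?thesis by (simp only:) simp
next
  case False
  then have "norm2 N x > 0" using norm2_nonneg[of N x] by linarith
  then have "{\<omega>\<in>space M. \<eta> * norm2 N x < \<bar>energy_dev (A \<omega>) t N x\<bar>}
      = {\<omega>\<in>space M. \<eta> < \<bar>energy_dev (A \<omega>) t N (\<lambda>j. x j / sqrt (norm2 N x))\<bar>}"
    by (subst energy_dev_normalize) (simp add: abs_mult mult.commute)
  then show ?thesis
    using prob_abs_energy_dev_gt_le_unit[OF assms(1,2) norm2_normalize[OF False] assms(3,4)] by simp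
qed

lemma measurable_entries [measurable]:
  "(\<lambda>\<omega>. restrict (\<lambda>(i,j). A \<omega> i j) ({..<m} \<times> {..<N})) \<in> measurable M (PiM ({..<m} \<times> {..<N}) (\<lambda>_. borel))"
  by (rule measurable_restrict) (auto simp: split_beta)

lemma ric_less_event_eq:
  assumes "t \<subseteq> {..<m}"
  shows "{\<omega>\<in>space M. ric (\<lambda>i j. A \<omega> i j / d) t N s < \<delta>}
    = (\<lambda>\<omega>. restrict (\<lambda>(i,j). A \<omega> i j) ({..<m} \<times> {..<N})) -`
        {f \<in> space (PiM ({..<m} \<times> {..<N}) (\<lambda>_. borel)). ric (\<lambda>i j. f (i, j) / d) t N s < \<delta>} \<inter> space M"
proof -
  have "ric (\<lambda>i j. restrict (\<lambda>(i,j). A \<omega> i j) ({..<m} \<times> {..<N}) (i, j) / d) t N s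
      = ric (\<lambda>i j. A \<omega> i j / d) t N s" for \<omega>
    using assms by (intro ric_cong) auto
  then show ?thesis using measurable_space[OF measurable_entries] by auto
qed

lemma sets_ric_less:
  assumes "t \<subseteq> {..<m}" "0 < N" "0 < s"
  shows "{\<omega>\<in>space M. ric (\<lambda>i j. A \<omega> i j / d) t N s < \<delta>} \<in> sets M"
  unfolding ric_less_event_eq[OF assms(1)]
  using assms by (intro measurable_sets[OF measurable_entries] sets_ric_less_PiM) auto

definition net_failure :: "nat set \<Rightarrow> nat \<Rightarrow> real \<Rightarrow> 'a set" where
  "net_failure t s \<eta> = (\<Union>S\<in>{S. S \<subseteq> {..<N} \<and> card S = s}. \<Union>k\<in>net_index S s.
     {\<omega>\<in>space M. \<eta> * norm2 N (net_point S s k) < \<bar>energy_dev (A \<omega>) t N (net_point S s k)\<bar>})"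

lemma finite_supports: "finite {S. S \<subseteq> {..<N} \<and> card S = s}"
  by (rule finite_subset[of _ "Pow {..<N}"]) auto

lemma sets_net_failure:
  assumes "t \<subseteq> {..<m}"
  shows "net_failure t s \<eta> \<in> sets M"
  unfolding net_failure_def using assms
  by (intro sets.finite_UN finite_supports finite_net_index) (auto intro: finite_subset)

lemma prob_net_failure_le:
  assumes t: "t \<subseteq> {..<m}" "t \<noteq> {}" and \<eta>: "0 < \<eta>" "\<eta> \<le> 1"
  shows "prob (net_failure t s \<eta>)
    \<le> real (N choose s) * (exp (201 * real s) * 4 ^ s) * (2 * exp (- (\<eta>\<^sup>2 * real (card t) / (16 * a\<^sup>2))))"
proof -
  let ?Ev = "\<lambda>S k. {\<omega>\<in>space M. \<eta> * norm2 N (net_point S s k) < \<bar>energy_dev (A \<omega>) t N (net_point S s k)\<bar>}"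
  let ?Bd = "2 * exp (- (\<eta>\<^sup>2 * real (card t) / (16 * a\<^sup>2)))"
  have Ev_sets: "{\<omega>\<in>space M. \<eta> * norm2 N (net_point S s' k) < \<bar>energy_dev (A \<omega>) t N (net_point S s' k)\<bar>}
      \<in> sets M" for S s' k
    using t by measurable
  have "prob (\<Union>k\<in>net_index S s. ?Ev S k) \<le> exp (201 * real s) * 4 ^ s * ?Bd"
    if S: "S \<subseteq> {..<N}" "card S = s" for S
  proof -
    have "finite S" using S finite_subset by blast
    then have "prob (\<Union>k\<in>net_index S s. ?Ev S k) \<le> (\<Sum>k\<in>net_index S s. prob (?Ev S k))"
      by (intro measure_UNION_le finite_net_index Ev_sets)
    also have "\<dots> \<le> (\<Sum>k\<in>net_index S s. ?Bd)"
      by (intro sum_mono prob_abs_energy_dev_gt_le t \<eta>)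
    also have "\<dots> \<le> exp (201 * real s) * 4 ^ s * ?Bd"
      using card_net_index_le[OF \<open>finite S\<close> S(2)] by (simp add: mult_right_mono)
    finally show ?thesis .
  qed
  then have "prob (net_failure t s \<eta>) \<le> (\<Sum>S\<in>{S. S \<subseteq> {..<N} \<and> card S = s}. exp (201 * real s) * 4 ^ s * ?Bd)"
    unfolding net_failure_def
    by (intro order.trans[OF measure_UNION_le[OF finite_supports] sum_mono])
      (auto intro!: sets.finite_UN finite_net_index Ev_sets intro: finite_subset)
  also have "\<dots> = real (N choose s) * (exp (201 * real s) * 4 ^ s) * ?Bd"
    using n_subsets[of "{..<N}" s] by simp
  finally show ?thesis .
qed

lemma ric_le_of_not_net_failure:
  assumes "\<omega> \<in> space M - net_failure t s \<eta>" "0 < s" "s \<le> N" "0 \<le> \<eta>"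
  shows "ric (\<lambda>i j. A \<omega> i j / sqrt (real (card t))) t N s \<le> 3 * \<eta>"
  using assms by (intro ric_le_of_net) (auto simp: net_failure_def not_less)

lemma prob_ric_less_ge:
  assumes t: "t \<subseteq> {..<m}" and s: "0 < s" "s \<le> N" and \<delta>: "0 < \<delta>" "\<delta> < 1"
  shows "prob {\<omega>\<in>space M. ric (\<lambda>i j. A \<omega> i j / sqrt (real (card t))) t N s < \<delta>}
    \<ge> 1 - 2 * (exp 1 * real N / real s) ^ s * exp (7 * real s / 2) * exp (- rip_const c * \<delta>\<^sup>2 * real (card t))"
    (is "prob ?G \<ge> 1 - ?K")
proof (cases "?K < 1")
  case False
  then show ?thesis using measure_nonneg[of M ?G] by linarith
next
  case True
  have "t \<noteq> {}"
  proof
    assume "t = {}"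
    have "1 * 1 \<le> (exp 1 * real N / real s) ^ s * exp (7 * real s / 2)"
      using one_le_exp_ratio_pow[OF s] by (intro mult_mono) auto
    with True \<open>t = {}\<close> show False by (simp add: mult.assoc)
  qed
  have "prob (net_failure t s (\<delta> / 4)) \<le> ?K"
    using prob_net_failure_le[OF t \<open>t \<noteq> {}\<close>, of "\<delta> / 4" s] \<delta>
      net_union_bound_le[OF a_ge_1 s \<delta>(1), of "real (card t)"] True
    by (simp add: rip_const_def)
  moreover have "space M - net_failure t s (\<delta> / 4) \<subseteq> ?G"
    using ric_le_of_not_net_failure[of _ t s "\<delta> / 4"] s \<delta> by fastforce
  then have "prob (space M - net_failure t s (\<delta> / 4)) \<le> prob ?G"
    by (intro finite_measure_mono sets_ric_less t) (use s in auto)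
  ultimately show ?thesis using sets_net_failure[OF t] by (simp add: prob_compl)
qed

lemma prob_ric_less_random_rows_ge:
  assumes T: "T \<in> measurable M (count_space UNIV)" "\<And>\<omega>. \<omega> \<in> space M \<Longrightarrow> T \<omega> \<subseteq> {..<m}"
    and indep: "indep_set
      (sigma_sets (space M) {(\<lambda>\<omega>. restrict (\<lambda>(i,j). A \<omega> i j) ({..<m} \<times> {..<N})) -` B \<inter> space M
        | B. B \<in> sets (PiM ({..<m} \<times> {..<N}) (\<lambda>_. borel))})
      (sigma_sets (space M) {T -` B \<inter> space M | B. B \<in> sets (count_space UNIV)})"
    and s: "0 < s" "s \<le> N" and \<delta>: "0 < \<delta>" "\<delta> < 1"
  shows "prob {\<omega>\<in>space M. ric (\<lambda>i j. A \<omega> i j / sqrt (real (card (T \<omega>)))) (T \<omega>) N s < \<delta>}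
    \<ge> 1 - 2 * (exp 1 * real N / real s) ^ s * exp (7 * real s / 2)
          * (\<integral>\<omega>. exp (- rip_const c * \<delta>\<^sup>2) ^ card (T \<omega>) \<partial>M)"
proof -
  let ?K = "2 * (exp 1 * real N / real s) ^ s * exp (7 * real s / 2)"
  let ?P = "PiM ({..<m} \<times> {..<N}) (\<lambda>_. borel)"
  let ?X = "\<lambda>\<omega>. restrict (\<lambda>(i,j). A \<omega> i j) ({..<m} \<times> {..<N})"
  define G where "G = (\<lambda>t. {f \<in> space ?P. ric (\<lambda>i j. f (i, j) / sqrt (real (card t))) t N s < \<delta>})"
  have "(\<integral>\<omega>. 1 - ?K * exp (- rip_const c * \<delta>\<^sup>2) ^ card (T \<omega>) \<partial>M)
      \<le> prob {\<omega>\<in>space M. ?X \<omega> \<in> G (T \<omega>)}"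
  proof (rule prob_event_at_independent_index_ge[OF _ T(1) _ indep])
    show "finite (Pow {..<m})" by simp
    show "T \<omega> \<in> Pow {..<m}" if "\<omega> \<in> space M" for \<omega> using T(2)[OF that] by simp
    show "G t \<in> sets ?P" if "t \<in> Pow {..<m}" for t
      unfolding G_def using that s by (intro sets_ric_less_PiM) auto
    show "1 - ?K * exp (- rip_const c * \<delta>\<^sup>2) ^ card t \<le> prob (?X -` G t \<inter> space M)"
      if "t \<in> Pow {..<m}" for t
      using prob_ric_less_ge[of t, OF _ s \<delta>] ric_less_event_eq[of t] that
      by (simp add: G_def exp_of_nat_mult[symmetric] mult_ac)
  qed
  also have "{\<omega>\<in>space M. ?X \<omega> \<in> G (T \<omega>)}
      = {\<omega>\<in>space M. ric (\<lambda>i j. A \<omega> i j / sqrt (real (card (T \<omega>)))) (T \<omega>) N s < \<delta>}"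
  proof -
    have "ric (\<lambda>i j. ?X \<omega> (i, j) / sqrt (real (card (T \<omega>)))) (T \<omega>) N s
        = ric (\<lambda>i j. A \<omega> i j / sqrt (real (card (T \<omega>)))) (T \<omega>) N s" if "\<omega> \<in> space M" for \<omega>
      using T(2)[OF that] by (intro ric_cong) auto
    then show ?thesis using measurable_space[OF measurable_entries] by (auto simp: G_def)
  qed
  moreover have "integrable M (\<lambda>\<omega>. exp (- rip_const c * \<delta>\<^sup>2) ^ card (T \<omega>))"
    using rip_const_pos[OF c_pos] \<delta>(1)
    by (intro integrable_const_bound[where B=1] AE_I2 measurable_compose[OF T(1)])
      (auto simp: power_le_one)
  ultimately show ?thesis by (simp add: prob_space)
qed

end

section \<open>The serial-star network\<close>

definition branch_received :: "nat \<Rightarrow> (nat \<Rightarrow> nat \<Rightarrow> bool) \<Rightarrow> nat \<Rightarrow> nat set" where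
  "branch_received K l r = {j. j < K \<and> (\<forall>k. j \<le> k \<and> k < K \<longrightarrow> l r k)}"

lemma received_eq_UN: "received R K l = (\<Union>r<R. (\<lambda>j. r * K + j) ` branch_received K l r)"
  unfolding received_def branch_received_def by auto

lemma received_subset: "received R K l \<subseteq> {..<R * K}"
proof
  fix x assume "x \<in> received R K l"
  then obtain r j where "x = r * K + j" "r < R" "j < K" unfolding received_def by auto
  moreover have "r * K + j < Suc r * K" using \<open>j < K\<close> by simp
  moreover have "Suc r * K \<le> R * K" using \<open>r < R\<close> by (intro mult_le_mono1) simp
  ultimately show "x \<in> {..<R * K}" by simp
qed

lemma card_received: "card (received R K l) = (\<Sum>r<R. card (branch_received K l r))"
proof -
  have "inj_on (\<lambda>(r, j). r * K + j) ({..<R} \<times> {..<K})"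
  proof (rule inj_onI, clarsimp)
    fix r j r' j' assume "j < K" "j' < K" "r * K + j = r' * K + j'"
    moreover have "r = (r * K + j) div K" "j = (r * K + j) mod K" using \<open>j < K\<close> by auto
    moreover have "r' = (r' * K + j') div K" "j' = (r' * K + j') mod K" using \<open>j' < K\<close> by auto
    ultimately show "r = r' \<and> j = j'" by metis
  qed
  then have "disjoint_family_on (\<lambda>r. (\<lambda>j. r * K + j) ` branch_received K l r) {..<R}"
    unfolding disjoint_family_on_def inj_on_def branch_received_def by fastforce
  then have "card (received R K l) = (\<Sum>r<R. card ((\<lambda>j. r * K + j) ` branch_received K l r))"
    unfolding received_eq_UN by (intro card_UN_disjoint') (auto simp: branch_received_def)
  also have "\<dots> = (\<Sum>r<R. card (branch_received K l r))"
    by (intro sum.cong refl card_image) (auto simp: inj_on_def)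
  finally show ?thesis .
qed

lemma all_links_from_iff_le_card:
  assumes "1 \<le> i" "i \<le> K"
  shows "(\<forall>k\<in>{K-i..<K}. l r k) \<longleftrightarrow> i \<le> card (branch_received K l r)"
proof
  assume "\<forall>k\<in>{K-i..<K}. l r k"
  then have "{K-i..<K} \<subseteq> branch_received K l r" unfolding branch_received_def by auto
  from card_mono[OF _ this] show "i \<le> card (branch_received K l r)"
    using assms by (simp add: branch_received_def)
next
  assume card: "i \<le> card (branch_received K l r)"
  show "\<forall>k\<in>{K-i..<K}. l r k"
  proof (rule ccontr)
    assume "\<not> (\<forall>k\<in>{K-i..<K}. l r k)"
    then obtain k0 where k0: "K - i \<le> k0" "k0 < K" "\<not> l r k0" by auto
    then have "branch_received K l r \<subseteq> {Suc k0..<K}"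
      unfolding branch_received_def by (auto simp: not_less_eq_eq)
    then have "card (branch_received K l r) \<le> K - Suc k0"
      using card_mono[of "{Suc k0..<K}"] by fastforce
    with card k0 assms show False by linarith
  qed
qed

lemma prod_of_bool_eq: "finite S \<Longrightarrow> (\<Prod>k\<in>S. (of_bool (P k) :: real)) = of_bool (\<forall>k\<in>S. P k)"
  by (induction S rule: finite_induct) auto

text \<open>Since \<open>j < card (branch_received K l r)\<close> iff the last \<open>j + 1\<close> links of branch \<open>r\<close> succeed,
  the identity \<open>q\<^sup>X = 1 - (1 - q) (\<Sum>j<X. q\<^sup>j)\<close> expresses \<open>q\<^sup>X\<close> as a polynomial in the link indicators.\<close>

lemma pow_card_branch_received:
  fixes q :: real
  shows "q ^ card (branch_received K l r)
    = 1 - (1 - q) * (\<Sum>j<K. q ^ j * (\<Prod>k\<in>{K - Suc j..<K}. of_bool (l r k)))"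
proof -
  define X where "X = card (branch_received K l r)"
  have "X \<le> K"
    unfolding X_def branch_received_def by (rule order.trans[OF card_mono[of "{..<K}"]]) auto
  have "(\<Prod>k\<in>{K - Suc j..<K}. (of_bool (l r k) :: real)) = of_bool (j < X)" if "j < K" for j
    using all_links_from_iff_le_card[of "Suc j" K l r] that by (simp add: prod_of_bool_eq X_def Suc_le_eq)
  then have "(\<Sum>j<K. q ^ j * (\<Prod>k\<in>{K - Suc j..<K}. of_bool (l r k))) = (\<Sum>j<K. q ^ j * of_bool (j < X))"
    by (intro sum.cong) auto
  also have "\<dots> = (\<Sum>j<X. q ^ j)"
    using \<open>X \<le> K\<close> by (subst sum.mono_neutral_cong_right[of "{..<K}" "{..<X}"]) auto
  finally show ?thesis
    using power_diff_1_eq[of q X] by (simp add: X_def algebra_simps)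
qed

locale erasure_network = prob_space +
  fixes L :: "'a \<Rightarrow> nat \<Rightarrow> nat \<Rightarrow> bool" and R K :: nat and p :: real
  assumes indep_links: "indep_vars (\<lambda>_. count_space UNIV) (\<lambda>(r,k) \<omega>. L \<omega> r k) ({..<R} \<times> {..<K})"
    and prob_link: "\<And>r k. r < R \<Longrightarrow> k < K \<Longrightarrow> prob {\<omega>\<in>space M. L \<omega> r k} = p"
begin

lemma indep_links_fst_snd: "indep_vars (\<lambda>_. count_space UNIV) (\<lambda>x \<omega>. L \<omega> (fst x) (snd x)) ({..<R} \<times> {..<K})"
  using indep_links by (simp add: case_prod_beta')

lemma measurable_link: "r < R \<Longrightarrow> k < K \<Longrightarrow> (\<lambda>\<omega>. L \<omega> r k) \<in> measurable M (count_space UNIV)"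
  using indep_links_fst_snd unfolding indep_vars_def by force

lemma expectation_link:
  assumes "r < R" "k < K"
  shows "(\<integral>\<omega>. of_bool (L \<omega> r k) \<partial>M) = p"
proof -
  have "{\<omega>\<in>space M. L \<omega> r k} = (\<lambda>\<omega>. L \<omega> r k) -` {True} \<inter> space M" by auto
  then have "{\<omega>\<in>space M. L \<omega> r k} \<in> events"
    using measurable_sets[OF measurable_link[OF assms]] by simp
  have "(\<integral>\<omega>. of_bool (L \<omega> r k) \<partial>M) = (\<integral>\<omega>. indicator {\<omega>\<in>space M. L \<omega> r k} \<omega> \<partial>M)"
    by (intro Bochner_Integration.integral_cong) (auto simp: indicator_def)
  also have "\<dots> = prob {\<omega>\<in>space M. L \<omega> r k}" using \<open>_ \<in> events\<close> by simp
  finally show ?thesis using prob_link[OF assms] by simp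
qed

lemma expectation_prod_links:
  assumes r: "r < R" and S: "S \<subseteq> {..<K}"
  shows "integrable M (\<lambda>\<omega>. \<Prod>k\<in>S. (of_bool (L \<omega> r k) :: real))"
    and "(\<integral>\<omega>. (\<Prod>k\<in>S. (of_bool (L \<omega> r k) :: real)) \<partial>M) = p ^ card S"
proof -
  have fin: "finite ({r} \<times> S)" using S finite_subset by auto
  have row: "(\<Prod>x\<in>{r} \<times> S. f x) = (\<Prod>k\<in>S. f (r, k))" for f :: "nat \<times> nat \<Rightarrow> real"
  proof -
    have "{r} \<times> S = Pair r ` S" by auto
    then show ?thesis by (simp add: prod.reindex inj_on_def)
  qed
  have ind: "indep_vars (\<lambda>_. borel) (\<lambda>x \<omega>. (of_bool (L \<omega> (fst x) (snd x)) :: real)) ({r} \<times> S)"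
    using indep_vars_compose2[OF indep_vars_subset[OF indep_links_fst_snd, of "{r} \<times> S"],
        of "\<lambda>_ b. of_bool b :: real" "\<lambda>_. borel"] r S by auto
  have int: "integrable M (\<lambda>\<omega>. (of_bool (L \<omega> (fst x) (snd x)) :: real))" if "x \<in> {r} \<times> S" for x
    using that r S
    by (intro integrable_const_bound[where B=1] AE_I2 measurable_compose[OF measurable_link]) auto
  show "integrable M (\<lambda>\<omega>. \<Prod>k\<in>S. (of_bool (L \<omega> r k) :: real))"
    using indep_vars_integrable[OF fin ind int] by (simp add: row)
  have "(\<integral>\<omega>. (\<Prod>k\<in>S. (of_bool (L \<omega> r k) :: real)) \<partial>M) = (\<Prod>k\<in>S. \<integral>\<omega>. of_bool (L \<omega> r k) \<partial>M)"
    using indep_vars_lebesgue_integral[OF fin ind int] by (simp add: row)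
  also have "\<dots> = p ^ card S"
    using r S by (simp add: expectation_link subset_iff)
  finally show "(\<integral>\<omega>. (\<Prod>k\<in>S. (of_bool (L \<omega> r k) :: real)) \<partial>M) = p ^ card S" .
qed

definition branch_weight :: "real \<Rightarrow> nat \<Rightarrow> 'a \<Rightarrow> real" where
  "branch_weight q r \<omega> = 1 - (1 - q) * (\<Sum>j<K. q ^ j * (\<Prod>k\<in>{K - Suc j..<K}. of_bool (L \<omega> r k)))"

lemma expectation_branch_weight:
  assumes "r < R"
  shows "integrable M (branch_weight q r)"
    and "(\<integral>\<omega>. branch_weight q r \<omega> \<partial>M) = 1 - (1 - q) * (\<Sum>j<K. q ^ j * p ^ Suc j)"
proof -
  have sub: "{K - Suc j..<K} \<subseteq> {..<K}" for j by auto
  have int: "integrable M (\<lambda>\<omega>. q ^ j * (\<Prod>k\<in>{K - Suc j..<K}. (of_bool (L \<omega> r k) :: real)))" for j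
    using expectation_prod_links(1)[OF assms sub] by simp
  then show "integrable M (branch_weight q r)"
    unfolding branch_weight_def by simp
  have "(\<integral>\<omega>. (\<Sum>j<K. q ^ j * (\<Prod>k\<in>{K - Suc j..<K}. (of_bool (L \<omega> r k) :: real))) \<partial>M)
      = (\<Sum>j<K. q ^ j * p ^ Suc j)"
  proof -
    have "(\<integral>\<omega>. (\<Sum>j<K. q ^ j * (\<Prod>k\<in>{K - Suc j..<K}. (of_bool (L \<omega> r k) :: real))) \<partial>M)
        = (\<Sum>j<K. q ^ j * (\<integral>\<omega>. (\<Prod>k\<in>{K - Suc j..<K}. (of_bool (L \<omega> r k) :: real)) \<partial>M))"
      by (subst Bochner_Integration.integral_sum) (use int in auto)
    also have "\<dots> = (\<Sum>j<K. q ^ j * p ^ Suc j)"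
    proof (intro sum.cong refl)
      fix j assume "j \<in> {..<K}"
      then have "card {K - Suc j..<K} = Suc j" by simp
      then show "q ^ j * (\<integral>\<omega>. (\<Prod>k\<in>{K - Suc j..<K}. (of_bool (L \<omega> r k) :: real)) \<partial>M) = q ^ j * p ^ Suc j"
        using expectation_prod_links(2)[OF assms sub[of j]] by simp
    qed
    finally show ?thesis .
  qed
  then show "(\<integral>\<omega>. branch_weight q r \<omega> \<partial>M) = 1 - (1 - q) * (\<Sum>j<K. q ^ j * p ^ Suc j)"
    unfolding branch_weight_def using int by (simp add: prob_space)
qed

lemma indep_branch_weights: "indep_vars (\<lambda>_. borel) (\<lambda>r. branch_weight q r) {..<R}"
proof -
  define B where "B = (\<lambda>r::nat. {r} \<times> {..<K})"
  define Y where "Y = (\<lambda>r (f :: nat \<times> nat \<Rightarrow> bool).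
    1 - (1 - q) * (\<Sum>j<K. q ^ j * (\<Prod>k\<in>{K - Suc j..<K}. (of_bool (f (r, k)) :: real))))"
  have "indep_vars (\<lambda>r. PiM (B r) (\<lambda>_. count_space UNIV))
      (\<lambda>r \<omega>. restrict (\<lambda>x. L \<omega> (fst x) (snd x)) (B r)) {..<R}"
    by (rule indep_vars_restrict[OF indep_links_fst_snd]) (auto simp: B_def disjoint_family_on_def)
  moreover have "Y r \<in> borel_measurable (PiM (B r) (\<lambda>_. count_space UNIV))" for r
    unfolding Y_def
    by (intro borel_measurable_diff borel_measurable_times borel_measurable_sum borel_measurable_prod
        borel_measurable_const measurable_compose[OF measurable_component_singleton]) (auto simp: B_def)
  ultimately have "indep_vars (\<lambda>_. borel) (\<lambda>r \<omega>. Y r (restrict (\<lambda>x. L \<omega> (fst x) (snd x)) (B r))) {..<R}"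
    by (rule indep_vars_compose2)
  moreover have "Y r (restrict (\<lambda>x. L \<omega> (fst x) (snd x)) (B r)) = branch_weight q r \<omega>" for r \<omega>
    unfolding Y_def branch_weight_def B_def
    by (intro arg_cong2[where f="(-)"] refl arg_cong2[where f="(*)"] sum.cong prod.cong) auto
  ultimately show ?thesis by simp
qed

lemma expectation_pow_card_received:
  assumes "0 < p" "p \<le> 1" "0 < q" "q < 1"
  shows "(\<integral>\<omega>. q ^ card (received R K (L \<omega>)) \<partial>M)
    = ((1 - p + p * (1 - q) * (p * q) ^ K) / (1 - p * q)) ^ R"
proof -
  have "p * q < p * 1" using assms by (intro mult_strict_left_mono) auto
  then have "p * q < 1" using assms by linarith
  have "(\<Sum>j<K. q ^ j * p ^ Suc j) = p * (\<Sum>j<K. (p * q) ^ j)"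
    by (simp add: sum_distrib_left power_mult_distrib mult_ac)
  also have "\<dots> = p * (((p * q) ^ K - 1) / (p * q - 1))"
    using \<open>p * q < 1\<close> by (simp add: geometric_sum)
  finally have geom: "(\<Sum>j<K. q ^ j * p ^ Suc j) = p * (((p * q) ^ K - 1) / (p * q - 1))" .
  have branch: "1 - (1 - q) * (\<Sum>j<K. q ^ j * p ^ Suc j) = (1 - p + p * (1 - q) * (p * q) ^ K) / (1 - p * q)"
    unfolding geom using \<open>p * q < 1\<close> by (simp add: field_simps)
  have "q ^ card (received R K (L \<omega>)) = (\<Prod>r<R. branch_weight q r \<omega>)" for \<omega>
    by (simp add: card_received power_sum branch_weight_def pow_card_branch_received)
  then have "(\<integral>\<omega>. q ^ card (received R K (L \<omega>)) \<partial>M) = (\<Prod>r<R. \<integral>\<omega>. branch_weight q r \<omega> \<partial>M)"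
    using indep_vars_lebesgue_integral[OF finite_lessThan indep_branch_weights] expectation_branch_weight(1)
    by simp
  also have "\<dots> = (1 - (1 - q) * (\<Sum>j<K. q ^ j * p ^ Suc j)) ^ R"
    by (simp add: expectation_branch_weight(2))
  finally show ?thesis unfolding branch .
qed

end

lemma received_ratio_bounds:
  fixes p q :: real
  assumes "0 < p" "p \<le> 1" "0 < q" "q < 1" "0 < K"
  shows "0 < 1 - p + p * (1 - q) * (p * q) ^ K" "1 - p + p * (1 - q) * (p * q) ^ K < 1 - p * q"
proof -
  have "p * q < p * 1" using assms by (intro mult_strict_left_mono) auto
  then have "p * q < 1" using assms by linarith
  then have "(p * q) ^ K < 1" using assms by (simp add: power_less_one_iff)
  then have "p * (1 - q) * (p * q) ^ K < p * (1 - q) * 1"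
    using assms by (intro mult_strict_left_mono) auto
  then show "1 - p + p * (1 - q) * (p * q) ^ K < 1 - p * q" by (simp add: algebra_simps)
  show "0 < 1 - p + p * (1 - q) * (p * q) ^ K"
    using assms by (simp add: add_nonneg_pos)
qed

theorem theorem3:
  fixes c :: real
  assumes c_pos: "c > 0"
  shows "\<exists>C>0. \<forall>(M :: 'a measure) (A :: 'a \<Rightarrow> nat \<Rightarrow> nat \<Rightarrow> real)
           (L :: 'a \<Rightarrow> nat \<Rightarrow> nat \<Rightarrow> bool) R K N s (p::real) (\<epsilon>::real) (\<delta>::real).
     prob_space M \<and>
     0 < R \<and> 0 < K \<and> 0 < N \<and> 0 < s \<and> s \<le> N \<and> 0 \<le> p \<and> p \<le> 1 \<and> \<epsilon> > 0 \<and>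
     0 < \<delta> \<and> \<delta> < 1 \<and>
     \<comment> \<open>A: subGaussian random matrix with parameter c, m = R*K rows, N columns\<close>
     prob_space.indep_vars M (\<lambda>_. borel) (\<lambda>(i,j) \<omega>. A \<omega> i j) ({..<R*K} \<times> {..<N}) \<and>
     (\<forall>i<R*K. \<forall>j<N.
        integrable M (\<lambda>\<omega>. A \<omega> i j) \<and> integrable M (\<lambda>\<omega>. (A \<omega> i j)\<^sup>2) \<and>
        (\<integral>\<omega>. A \<omega> i j \<partial>M) = 0 \<and> (\<integral>\<omega>. (A \<omega> i j)\<^sup>2 \<partial>M) = 1 \<and>
        (\<forall>\<theta>::real. (\<integral>\<^sup>+\<omega>. ennreal (exp (\<theta> * A \<omega> i j)) \<partial>M) \<le> ennreal (exp (c * \<theta>\<^sup>2)))) \<and>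
     \<comment> \<open>links: independent Bernoulli(p) erasure channels\<close>
     prob_space.indep_vars M (\<lambda>_. count_space UNIV) (\<lambda>(r,k) \<omega>. L \<omega> r k) ({..<R} \<times> {..<K}) \<and>
     (\<forall>r<R. \<forall>k<K. measure M {\<omega>\<in>space M. L \<omega> r k} = p) \<and>
     \<comment> \<open>the received index set T is independent of A\<close>
     (\<lambda>\<omega>. received R K (L \<omega>)) \<in> measurable M (count_space UNIV) \<and>
     prob_space.indep_set M
        (sigma_sets (space M) {(\<lambda>\<omega>. restrict (\<lambda>(i,j). A \<omega> i j) ({..<R*K} \<times> {..<N})) -` S \<inter> space M
            | S. S \<in> sets (Pi\<^sub>M ({..<R*K} \<times> {..<N}) (\<lambda>_. borel))})
        (sigma_sets (space M) {(\<lambda>\<omega>. received R K (L \<omega>)) -` S \<inter> space M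
            | S. S \<in> sets (count_space UNIV)}) \<and>
     \<comment> \<open>the hypothesis on R (right-hand side is +infinity when p = 0)\<close>
     p > 0 \<and>
     real R \<ge> inverse (ln ((1 - p * exp (- C * \<delta>\<^sup>2)) /
                 (1 - p + p * (1 - exp (- C * \<delta>\<^sup>2)) * (p * exp (- C * \<delta>\<^sup>2)) ^ K)))
              * (4/3 * real s * ln (exp 1 * real N / real s) + 14/3 * real s + 4/3 * ln (2 / \<epsilon>))
     \<longrightarrow>
     measure M {\<omega>\<in>space M.
        ric (\<lambda>i j. A \<omega> i j / sqrt (real (card (received R K (L \<omega>)))))
            (received R K (L \<omega>)) N s < \<delta>} \<ge> 1 - \<epsilon>"
proof ((intro exI[of _ "rip_const c"] conjI allI impI; (elim conjE)?), goal_cases)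
  case 1
  show ?case using c_pos by (rule rip_const_pos)
next
  case (2 M A L R K N s p \<epsilon> \<delta>)
  interpret subgaussian_matrix M A "R * K" N c
    using 2(1,12,13) c_pos unfolding subgaussian_matrix_def subgaussian_matrix_axioms_def by auto
  interpret erasure_network M L R K p
    using 2(1,14,15) unfolding erasure_network_def erasure_network_axioms_def by auto
  define q where "q = exp (- rip_const c * \<delta>\<^sup>2)"
  have q: "0 < q" "q < 1" using rip_const_pos[OF c_pos] 2 by (auto simp: q_def)
  let ?a = "1 - p + p * (1 - q) * (p * q) ^ K" and ?b = "1 - p * q"
  let ?K = "2 * (exp 1 * real N / real s) ^ s * exp (7 * real s / 2)"
  show ?case
  proof (cases "\<epsilon> < 1")
    case True
    have "1 - \<epsilon> \<le> 1 - ?K * (?a / ?b) ^ R"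
      using 2 True received_ratio_bounds[of p q K] q
      by (intro diff_left_mono pow_ratio_le_of_rate) (auto simp: q_def)
    also have "\<dots> = 1 - ?K * (\<integral>\<omega>. q ^ card (received R K (L \<omega>)) \<partial>M)"
      using 2 q by (simp add: expectation_pow_card_received)
    also have "\<dots> \<le> measure M {\<omega>\<in>space M.
        ric (\<lambda>i j. A \<omega> i j / sqrt (real (card (received R K (L \<omega>))))) (received R K (L \<omega>)) N s < \<delta>}"
      unfolding q_def using 2 received_subset by (intro prob_ric_less_random_rows_ge) auto
    finally show ?thesis .
  qed (simp add: measure_nonneg order_trans[of _ 0])
qed

end
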